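(* The derivation $\delta$ of the free algebra below induces a derivation (also denoted $\delta$) of $B$, and there is a $k$-algebra isomorphism $A_k\cong B[x_7;\delta]$.
   Context: Let $k$ be a field. $A_k=k\langle x_1,\dots,x_7\rangle/(r_1,\dots,r_7)$ with $r_1=[x_2,x_3]+[x_4,x_5]+[x_6,x_7]$, $r_2=[x_3,x_1]+[x_4,x_6]+[x_7,x_5]$, $r_3=[x_1,x_2]+[x_6,x_5]+[x_7,x_4]$, $r_4=[x_5,x_1]+[x_3,x_7]+[x_6,x_2]$, $r_5=[x_1,x_4]+[x_2,x_7]+[x_3,x_6]$, $r_6=[x_7,x_1]+[x_5,x_3]+[x_2,x_4]$, $r_7=[x_1,x_6]+[x_4,x_3]+[x_5,x_2]$. Let $B=k\langle x_1,\dots,x_6\rangle/([x_1,x_6]+[x_5,x_2]+[x_4,x_3])$. Let $\delta$ be the derivation of $k\langle x_1,\dots,x_6\rangle$ with $\delta(x_1)=[x_4,x_2]+[x_3,x_5]$, $\delta(x_2)=[x_1,x_4]+[x_3,x_6]$, $\delta(x_3)=[x_5,x_1]+[x_6,x_2]$, $\delta(x_4)=[x_2,x_1]+[x_5,x_6]$, $\delta(x_5)=[x_1,x_3]+[x_6,x_4]$, $\delta(x_6)=[x_2,x_3]+[x_4,x_5]$. For a derivation $\delta$ of an algebra $B$, the Ore extension $B[X;\delta]$ is the free left $B$-module $\bigoplus_{i\ge0}BX^i$ with the associative multiplication determined by $X^iX^j=X^{i+j}$ and $Xb=bX+\delta(b)$ for $b\in B$. *)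

theory Defs
  imports "HOL-Algebra.QuotRing" "HOL-Algebra.Ideal" "HOL-Algebra.FiniteProduct"
begin

text \<open>Elements are finitely supported k-valued functions on words (lists of letters);
  the letter i stands for the generator x_i, and only letters 1..n may occur.\<close>

definition fa_mult :: "(nat list \<Rightarrow> 'k::field) \<Rightarrow> (nat list \<Rightarrow> 'k) \<Rightarrow> (nat list \<Rightarrow> 'k)" where
  "fa_mult p q = (\<lambda>w. \<Sum>i\<le>length w. p (take i w) * q (drop i w))"

definition free_alg :: "nat \<Rightarrow> (nat list \<Rightarrow> 'k::field) ring" where
  "free_alg n = \<lparr> carrier = {p. finite {w. p w \<noteq> 0} \<and> (\<forall>w. p w \<noteq> 0 \<longrightarrow> set w \<subseteq> {1..n})},
                  mult = fa_mult,
                  one = (\<lambda>w. if w = [] then 1 else 0),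
                  zero = (\<lambda>w. 0),
                  add = (\<lambda>p q w. p w + q w) \<rparr>"

definition gen :: "nat \<Rightarrow> (nat list \<Rightarrow> 'k::field)" where
  "gen i = (\<lambda>w. if w = [i] then 1 else 0)"

definition mon :: "nat list \<Rightarrow> (nat list \<Rightarrow> 'k::field)" where
  "mon u = (\<lambda>w. if w = u then 1 else 0)"

definition fa_scalar :: "'k::field \<Rightarrow> (nat list \<Rightarrow> 'k)" where
  "fa_scalar c = (\<lambda>w. if w = [] then c else 0)"

definition comm :: "(nat list \<Rightarrow> 'k::field) \<Rightarrow> (nat list \<Rightarrow> 'k) \<Rightarrow> (nat list \<Rightarrow> 'k)" where
  "comm a b = (\<lambda>w. fa_mult a b w - fa_mult b a w)"

text \<open>The (unique) derivation of the free algebra with prescribed values D i on the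
  generators x_i: on a word x_{w_1}...x_{w_m} it is sum_i x_{w_1}..x_{w_{i-1}} D(w_i) x_{w_{i+1}}..x_{w_m},
  extended k-linearly.\<close>
definition der_word :: "(nat \<Rightarrow> (nat list \<Rightarrow> 'k::field)) \<Rightarrow> nat list \<Rightarrow> (nat list \<Rightarrow> 'k)" where
  "der_word D u = (\<lambda>w. \<Sum>i<length u.
      fa_mult (fa_mult (mon (take i u)) (D (u ! i))) (mon (drop (Suc i) u)) w)"

definition der_ext :: "(nat \<Rightarrow> (nat list \<Rightarrow> 'k::field)) \<Rightarrow> (nat list \<Rightarrow> 'k) \<Rightarrow> (nat list \<Rightarrow> 'k)" where
  "der_ext D p = (\<lambda>w. \<Sum>u\<in>{u. p u \<noteq> 0}. p u * der_word D u w)"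

definition relA :: "nat \<Rightarrow> (nat list \<Rightarrow> 'k::field)" where
  "relA j = (if j = 1 then (\<lambda>w. comm (gen 2) (gen 3) w + comm (gen 4) (gen 5) w + comm (gen 6) (gen 7) w)
        else if j = 2 then (\<lambda>w. comm (gen 3) (gen 1) w + comm (gen 4) (gen 6) w + comm (gen 7) (gen 5) w)
        else if j = 3 then (\<lambda>w. comm (gen 1) (gen 2) w + comm (gen 6) (gen 5) w + comm (gen 7) (gen 4) w)
        else if j = 4 then (\<lambda>w. comm (gen 5) (gen 1) w + comm (gen 3) (gen 7) w + comm (gen 6) (gen 2) w)
        else if j = 5 then (\<lambda>w. comm (gen 1) (gen 4) w + comm (gen 2) (gen 7) w + comm (gen 3) (gen 6) w)
        else if j = 6 then (\<lambda>w. comm (gen 7) (gen 1) w + comm (gen 5) (gen 3) w + comm (gen 2) (gen 4) w)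
        else (\<lambda>w. comm (gen 1) (gen 6) w + comm (gen 4) (gen 3) w + comm (gen 5) (gen 2) w))"

definition idealA :: "(nat list \<Rightarrow> 'k::field) set" where
  "idealA = genideal (free_alg 7) (relA ` {1..7})"

definition A_alg :: "((nat list \<Rightarrow> 'k::field) set) ring" where
  "A_alg = free_alg 7 Quot idealA"

definition relB :: "nat list \<Rightarrow> 'k::field" where
  "relB = (\<lambda>w. comm (gen 1) (gen 6) w + comm (gen 5) (gen 2) w + comm (gen 4) (gen 3) w)"

definition idealB :: "(nat list \<Rightarrow> 'k::field) set" where
  "idealB = genideal (free_alg 6) {relB}"

definition B_alg :: "((nat list \<Rightarrow> 'k::field) set) ring" where
  "B_alg = free_alg 6 Quot idealB"

definition delta_gen :: "nat \<Rightarrow> (nat list \<Rightarrow> 'k::field)" where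
  "delta_gen i = (if i = 1 then (\<lambda>w. comm (gen 4) (gen 2) w + comm (gen 3) (gen 5) w)
        else if i = 2 then (\<lambda>w. comm (gen 1) (gen 4) w + comm (gen 3) (gen 6) w)
        else if i = 3 then (\<lambda>w. comm (gen 5) (gen 1) w + comm (gen 6) (gen 2) w)
        else if i = 4 then (\<lambda>w. comm (gen 2) (gen 1) w + comm (gen 5) (gen 6) w)
        else if i = 5 then (\<lambda>w. comm (gen 1) (gen 3) w + comm (gen 6) (gen 4) w)
        else if i = 6 then (\<lambda>w. comm (gen 2) (gen 3) w + comm (gen 4) (gen 5) w)
        else (\<lambda>w. 0))"

definition delta :: "(nat list \<Rightarrow> 'k::field) \<Rightarrow> (nat list \<Rightarrow> 'k)" where
  "delta = der_ext delta_gen"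

definition induced_map :: "('a, 'b) ring_scheme \<Rightarrow> 'a set \<Rightarrow> ('a \<Rightarrow> 'a) \<Rightarrow> 'a set \<Rightarrow> 'a set" where
  "induced_map R I d = (\<lambda>C. I +>\<^bsub>R\<^esub> d (SOME p. p \<in> C))"

definition delta_B :: "(nat list \<Rightarrow> 'k::field) set \<Rightarrow> (nat list \<Rightarrow> 'k) set" where
  "delta_B = induced_map (free_alg 6) idealB delta"

definition A_emb :: "'k::field \<Rightarrow> (nat list \<Rightarrow> 'k) set" where
  "A_emb c = idealA +>\<^bsub>free_alg 7\<^esub> fa_scalar c"

definition B_emb :: "'k::field \<Rightarrow> (nat list \<Rightarrow> 'k) set" where
  "B_emb c = idealB +>\<^bsub>free_alg 6\<^esub> fa_scalar c"

definition is_k_derivation :: "('a, 'b) ring_scheme \<Rightarrow> ('k \<Rightarrow> 'a) \<Rightarrow> ('a \<Rightarrow> 'a) \<Rightarrow> bool" where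
  "is_k_derivation R e d \<longleftrightarrow>
     d \<in> carrier R \<rightarrow> carrier R \<and>
     (\<forall>x\<in>carrier R. \<forall>y\<in>carrier R. d (x \<oplus>\<^bsub>R\<^esub> y) = d x \<oplus>\<^bsub>R\<^esub> d y) \<and>
     (\<forall>x\<in>carrier R. \<forall>y\<in>carrier R. d (x \<otimes>\<^bsub>R\<^esub> y) = (d x \<otimes>\<^bsub>R\<^esub> y) \<oplus>\<^bsub>R\<^esub> (x \<otimes>\<^bsub>R\<^esub> d y)) \<and>
     (\<forall>c. \<forall>x\<in>carrier R. d (e c \<otimes>\<^bsub>R\<^esub> x) = e c \<otimes>\<^bsub>R\<^esub> d x)"

text \<open>Ore extension R[X; d]: an element sum_i f(i) X^i is the finitely supported coefficient
  function f.  Multiplication is determined by X^i X^j = X^(i+j) and X b = b X + d(b), i.e.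
  (b X^i)(c X^j) = sum_{l<=i} binom(i,l) b d^(i-l)(c) X^(l+j).\<close>
definition ore_ext :: "('a, 'b) ring_scheme \<Rightarrow> ('a \<Rightarrow> 'a) \<Rightarrow> (nat \<Rightarrow> 'a) ring" where
  "ore_ext R d = \<lparr> carrier = {f. (\<forall>i. f i \<in> carrier R) \<and> finite {i. f i \<noteq> \<zero>\<^bsub>R\<^esub>}},
     mult = (\<lambda>f g n. \<Oplus>\<^bsub>R\<^esub> i\<in>{i. f i \<noteq> \<zero>\<^bsub>R\<^esub>}. \<Oplus>\<^bsub>R\<^esub> j\<in>{j. g j \<noteq> \<zero>\<^bsub>R\<^esub>}. \<Oplus>\<^bsub>R\<^esub> l\<in>{..i}.
               (if l + j = n then f i \<otimes>\<^bsub>R\<^esub> add_pow R (i choose l) ((d ^^ (i - l)) (g j)) else \<zero>\<^bsub>R\<^esub>)),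
     one = (\<lambda>n. if n = 0 then \<one>\<^bsub>R\<^esub> else \<zero>\<^bsub>R\<^esub>),
     zero = (\<lambda>n. \<zero>\<^bsub>R\<^esub>),
     add = (\<lambda>f g n. f n \<oplus>\<^bsub>R\<^esub> g n) \<rparr>"

definition ore_emb :: "('a, 'b) ring_scheme \<Rightarrow> ('k \<Rightarrow> 'a) \<Rightarrow> 'k \<Rightarrow> (nat \<Rightarrow> 'a)" where
  "ore_emb R e c = (\<lambda>n. if n = 0 then e c else \<zero>\<^bsub>R\<^esub>)"

end

theory Submission
  imports Defs
begin

text \<open>
  Elements \<open>\<Sum>\<^sub>n b\<^sub>n X\<^sup>n\<close> of \<open>B[X; \<delta>]\<close> are modelled by sequences of lifts
  \<open>b\<^sub>n \<in> k\<langle>x\<^sub>1,\<dots>,x\<^sub>6\<rangle>\<close>, on which \<open>k\<langle>x\<^sub>1,\<dots>,x\<^sub>7\<rangle>\<close> acts: \<open>x\<^sub>a\<close> for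
  \<open>a \<le> 6\<close> by left multiplication and \<open>x\<^sub>7\<close> as \<open>X\<close>, i.e.
  \<open>X \<cdot> \<Sum> b\<^sub>n X\<^sup>n = \<Sum> (b\<^sub>n\<^sub>-\<^sub>1 + \<delta> b\<^sub>n) X\<^sup>n\<close>.
  The relations \<open>r\<^sub>1,\<dots>,r\<^sub>6\<close> are, up to sign, \<open>x\<^sub>7 x\<^sub>a - x\<^sub>a x\<^sub>7 - \<delta>(x\<^sub>a)\<close>, which act by zero
  by the Leibniz rule, and \<open>r\<^sub>7\<close> is the relation of \<open>B\<close>, which \<open>\<delta>\<close> annihilates; so the
  whole ideal of \<open>A\<^sub>k\<close> acts into sequences with coefficients in the ideal of \<open>B\<close>, and
  \<open>p \<mapsto> p \<cdot> 1\<close> induces a map \<open>A\<^sub>k \<rightarrow> B[X; \<delta>]\<close>. It is multiplicative because \<open>p\<close>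
  acts on \<open>g\<close> as left Ore multiplication by \<open>p \<cdot> 1\<close>, surjective because
  \<open>\<Sum> b\<^sub>n x\<^sub>7\<^sup>n\<close> is sent to \<open>\<Sum> b\<^sub>n X\<^sup>n\<close>, and injective because the relations
  \<open>x\<^sub>7 b \<equiv> b x\<^sub>7 + \<delta>(b)\<close> rewrite every \<open>p\<close> into \<open>\<Sum> (p \<cdot> 1)\<^sub>n x\<^sub>7\<^sup>n\<close> modulo the
  ideal of \<open>A\<^sub>k\<close>.
\<close>

lemma fa_mult_assoc: "fa_mult (fa_mult p q) r = fa_mult p (fa_mult (q::nat list \<Rightarrow> 'k::field) r)"
proof (rule ext)
  fix w :: "nat list"
  define n where "n = length w"
  define g where "g = (\<lambda>j m. p (take j w) * q (take m (drop j w)) * r (drop (j+m) w))"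
  have L: "fa_mult (fa_mult p q) r w = (\<Sum>i\<le>n. \<Sum>j\<le>i. g j (i - j))"
    unfolding fa_mult_def n_def g_def
    by (auto simp: sum_distrib_right min_absorb2 take_drop intro!: sum.cong)
  have R: "fa_mult p (fa_mult q r) w = (\<Sum>j\<le>n. \<Sum>m\<le>n-j. g j m)"
    unfolding fa_mult_def n_def g_def
    by (auto simp: sum_distrib_left mult.assoc add.commute intro!: sum.cong)
  have "(\<Sum>i\<le>n. \<Sum>j\<le>i. g j (i - j)) = (\<Sum>(j,m)\<in>{(j,m). j+m \<le> n}. g j m)"
    by (rule sum.triangle_reindex_eq[symmetric])
  also have "{(j,m). j+m \<le> n} = Sigma {..n} (\<lambda>j. {..n-j})" by auto
  also have "(\<Sum>(j,m)\<in>Sigma {..n} (\<lambda>j. {..n-j}). g j m) = (\<Sum>j\<le>n. \<Sum>m\<le>n-j. g j m)"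
    by (rule sum.Sigma[symmetric]) auto
  finally show "fa_mult (fa_mult p q) r w = fa_mult p (fa_mult q r) w" using L R by simp
qed

lemma fa_mult_addL: "fa_mult (\<lambda>w. p w + q w) r = (\<lambda>w. fa_mult p r w + fa_mult (q::nat list \<Rightarrow> 'k::field) r w)"
  unfolding fa_mult_def by (auto simp: sum.distrib ring_distribs)

lemma fa_mult_addR: "fa_mult r (\<lambda>w. p w + q w) = (\<lambda>w. fa_mult r p w + fa_mult (r::nat list \<Rightarrow> 'k::field) q w)"
  unfolding fa_mult_def by (auto simp: sum.distrib ring_distribs)

lemma fa_mult_oneL: "fa_mult (\<lambda>w. if w = [] then 1 else 0) p = (p::nat list \<Rightarrow> 'k::field)"
proof (rule ext)
  fix w :: "nat list"
  have "fa_mult (\<lambda>w. if w = [] then 1 else 0) p w = (\<Sum>i\<le>length w. if i = 0 then p w else 0)"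
    unfolding fa_mult_def by (rule sum.cong) auto
  also have "\<dots> = p w" by (simp add: sum.delta)
  finally show "fa_mult (\<lambda>w. if w = [] then 1 else 0) p w = p w" .
qed

lemma fa_mult_oneR: "fa_mult p (\<lambda>w. if w = [] then 1 else 0) = (p::nat list \<Rightarrow> 'k::field)"
proof (rule ext)
  fix w :: "nat list"
  have "fa_mult p (\<lambda>w. if w = [] then 1 else 0) w = (\<Sum>i\<le>length w. if i = length w then p w else 0)"
    unfolding fa_mult_def by (rule sum.cong) auto
  also have "\<dots> = p w" by (simp add: sum.delta)
  finally show "fa_mult p (\<lambda>w. if w = [] then 1 else 0) w = p w" .
qed

lemma fa_mult_nz: "fa_mult p q w \<noteq> 0 \<Longrightarrow> \<exists>u v. w = u @ v \<and> p u \<noteq> 0 \<and> (q::nat list \<Rightarrow> 'k::field) v \<noteq> 0"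
  unfolding fa_mult_def
  by (metis (no_types, lifting) append_take_drop_id mult_not_zero sum.neutral)

lemma fa_mult_supp: "{w. fa_mult p q w \<noteq> 0} \<subseteq> (\<lambda>(u,v). u @ v) ` ({u. p u \<noteq> 0} \<times> {v. (q::nat list \<Rightarrow> 'k::field) v \<noteq> 0})"
  using fa_mult_nz by fastforce

lemma carrier_free_alg: "p \<in> carrier (free_alg n) \<longleftrightarrow> finite {w. p w \<noteq> 0} \<and> (\<forall>w. p w \<noteq> 0 \<longrightarrow> set w \<subseteq> {1..n})"
  by (simp add: free_alg_def)

lemma free_alg_simps:
  "mult (free_alg n) = fa_mult"
  "one (free_alg n) = (\<lambda>w. if w = [] then 1 else 0)"
  "zero (free_alg n) = (\<lambda>w. 0)"
  "add (free_alg n) = (\<lambda>p q w. p w + q w)"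
  by (simp_all add: free_alg_def)

lemma fa_mult_closed:
  assumes "p \<in> carrier (free_alg n)" "q \<in> carrier (free_alg n)"
  shows "fa_mult p q \<in> carrier (free_alg n :: (nat list \<Rightarrow> 'k::field) ring)"
proof -
  have "finite {w. fa_mult p q w \<noteq> 0}"
    using assms by (auto simp: carrier_free_alg intro: finite_subset[OF fa_mult_supp])
  moreover have "\<forall>w. fa_mult p q w \<noteq> 0 \<longrightarrow> set w \<subseteq> {1..n}"
    using assms fa_mult_nz unfolding carrier_free_alg by fastforce
  ultimately show ?thesis by (simp add: carrier_free_alg)
qed

lemma fa_add_closed:
  assumes "p \<in> carrier (free_alg n)" "q \<in> carrier (free_alg n)"
  shows "(\<lambda>w. p w + q w) \<in> carrier (free_alg n :: (nat list \<Rightarrow> 'k::field) ring)"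
proof -
  have "{w. p w + q w \<noteq> 0} \<subseteq> {w. p w \<noteq> 0} \<union> {w. q w \<noteq> 0}" by auto
  then show ?thesis using assms unfolding carrier_free_alg
    by (metis (mono_tags, lifting) add.right_neutral add_0 finite_Un finite_subset)
qed

lemma ring_free_alg: "ring (free_alg n :: (nat list \<Rightarrow> 'k::field) ring)"
proof (rule ringI)
  show "abelian_group (free_alg n :: (nat list \<Rightarrow> 'k::field) ring)"
  proof (rule abelian_groupI, goal_cases)
    case (1 x y) then show ?case by (simp add: free_alg_simps fa_add_closed)
  next
    case 2 then show ?case by (simp add: free_alg_simps carrier_free_alg)
  next
    case (3 x y z) then show ?case by (simp add: free_alg_simps add.assoc)
  next
    case (4 x y) then show ?case by (simp add: free_alg_simps add.commute)
  next
    case (5 x) then show ?case by (simp add: free_alg_simps)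
  next
    case (6 x)
    then show ?case by (intro bexI[of _ "\<lambda>w. - x w"]) (auto simp: free_alg_simps carrier_free_alg)
  qed
  show "monoid (free_alg n :: (nat list \<Rightarrow> 'k::field) ring)"
  proof (rule monoidI)
    show "\<one>\<^bsub>free_alg n\<^esub> \<in> carrier (free_alg n :: (nat list \<Rightarrow> 'k::field) ring)"
      by (simp add: free_alg_simps carrier_free_alg)
  qed (auto simp: free_alg_simps fa_mult_closed fa_mult_assoc fa_mult_oneL fa_mult_oneR)
qed (simp_all add: free_alg_simps fa_mult_addL fa_mult_addR)

abbreviation fsupp :: "(nat list \<Rightarrow> 'k::field) \<Rightarrow> bool" where
  "fsupp p \<equiv> finite {w. p w \<noteq> 0}"

lemma fsupp_add: "fsupp p \<Longrightarrow> fsupp q \<Longrightarrow> fsupp (\<lambda>w. p w + q w)"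
  by (rule finite_subset[of _ "{w. p w \<noteq> 0} \<union> {w. q w \<noteq> 0}"]) auto

lemma fsupp_scale: "fsupp p \<Longrightarrow> fsupp (\<lambda>w. c * p w)"
  by (rule finite_subset[of _ "{w. p w \<noteq> 0}"]) auto

lemma fsupp_sum: "finite A \<Longrightarrow> (\<forall>i\<in>A. fsupp (f i)) \<Longrightarrow> fsupp (\<lambda>w. \<Sum>i\<in>A. c i * f i w)"
proof (induction A rule: finite_induct)
  case empty then show ?case by simp
next
  case (insert a A)
  then show ?case using fsupp_add[OF fsupp_scale[of "f a" "c a"], of "\<lambda>w. \<Sum>i\<in>A. c i * f i w"]
    by simp
qed

lemma fsupp_mult: "fsupp p \<Longrightarrow> fsupp q \<Longrightarrow> fsupp (fa_mult p (q::nat list \<Rightarrow> 'k::field))"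
  using finite_subset[OF fa_mult_supp[of p q]] by auto

lemma gen_mon: "gen i = mon [i]"
  unfolding gen_def mon_def by simp

lemma mon_Nil: "mon [] = (\<lambda>w. if w = [] then 1 else 0)"
  unfolding mon_def by simp

lemma mon_mult: "fa_mult (mon u) (mon v) = (mon (u @ v) :: nat list \<Rightarrow> 'k::field)"
proof (rule ext)
  fix w :: "nat list"
  have "fa_mult (mon u) (mon v) w = (\<Sum>i\<le>length w. if i = length u \<and> w = u @ v then (1::'k) else 0)"
  proof -
    have "\<And>x. x \<le> length w \<Longrightarrow> (take x w = u \<and> drop x w = v) \<longleftrightarrow> (x = length u \<and> w = u @ v)"
      by (metis append_eq_conv_conj append_take_drop_id length_take min_absorb2)
    then show ?thesis unfolding fa_mult_def mon_def
      by (intro sum.cong) auto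
  qed
  also have "\<dots> = mon (u @ v) w"
    by (auto simp: mon_def sum.delta)
  finally show "fa_mult (mon u) (mon v) w = (mon (u @ v) w :: 'k)" .
qed

lemma supp_mon: "{w. (mon u :: nat list \<Rightarrow> 'k::field) w \<noteq> 0} = {u}"
  by (auto simp: mon_def)

lemma fsupp_mon: "fsupp (mon u :: nat list \<Rightarrow> 'k::field)"
  by (simp add: supp_mon)

lemma fsupp_gen: "fsupp (gen u :: nat list \<Rightarrow> 'k::field)"
  by (simp add: gen_mon supp_mon)

lemma fa_mult_sumL: "fa_mult (\<lambda>w. \<Sum>i\<in>A. c i * f i w) r = (\<lambda>w. \<Sum>i\<in>A. c i * fa_mult (f i) r w)"
  unfolding fa_mult_def by (rule ext) (simp add: sum_distrib_left sum_distrib_right mult.assoc sum.swap[of _ A])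

lemma fa_mult_sumR: "fa_mult r (\<lambda>w. \<Sum>i\<in>A. c i * f i w) = (\<lambda>w. \<Sum>i\<in>A. c i * fa_mult r (f i) w)"
  unfolding fa_mult_def by (rule ext) (simp add: sum_distrib_left sum_distrib_right mult.assoc mult.left_commute sum.swap[of _ A])

lemma fa_mult_sumL': "fa_mult (\<lambda>w. \<Sum>i\<in>A. f i w) r = (\<lambda>w. \<Sum>i\<in>A. fa_mult (f i) r w)"
  using fa_mult_sumL[of "\<lambda>_. 1" f A r] by simp

lemma fa_mult_sumR': "fa_mult r (\<lambda>w. \<Sum>i\<in>A. f i w) = (\<lambda>w. \<Sum>i\<in>A. fa_mult r (f i) w)"
  using fa_mult_sumR[of r "\<lambda>_. 1" f A] by simp

lemma fa_mult_scaleL: "fa_mult (\<lambda>w. c * f w) r = (\<lambda>w. c * fa_mult f r w)"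
  unfolding fa_mult_def by (rule ext) (simp add: sum_distrib_left mult.assoc)

lemma fa_mult_scaleR: "fa_mult r (\<lambda>w. c * f w) = (\<lambda>w. c * fa_mult r f w)"
  unfolding fa_mult_def by (rule ext) (simp add: sum_distrib_left mult.left_commute)

lemma fa_mult_diffL: "fa_mult (\<lambda>w. p w - q w) r = (\<lambda>w. fa_mult p r w - fa_mult q r w)"
  unfolding fa_mult_def by (rule ext) (simp add: sum_subtractf left_diff_distrib)

lemma fa_mult_diffR: "fa_mult r (\<lambda>w. p w - q w) = (\<lambda>w. fa_mult r p w - fa_mult r q w)"
  unfolding fa_mult_def by (rule ext) (simp add: sum_subtractf right_diff_distrib)

lemma fa_mult_zeroL: "fa_mult (\<lambda>w. 0) r = (\<lambda>w. 0)"
  unfolding fa_mult_def by simp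

lemma fa_mult_zeroR: "fa_mult r (\<lambda>w. 0) = (\<lambda>w. 0)"
  unfolding fa_mult_def by simp

lemma mon_carrier: "set u \<subseteq> {1..n} \<Longrightarrow> (mon u :: nat list \<Rightarrow> 'k::field) \<in> carrier (free_alg n)"
  by (simp add: carrier_free_alg supp_mon) (simp add: mon_def)

lemma gen_carrier: "i \<in> {1..n} \<Longrightarrow> (gen i :: nat list \<Rightarrow> 'k::field) \<in> carrier (free_alg n)"
  by (simp add: gen_mon mon_carrier)

lemma carrier_scale: "p \<in> carrier (free_alg n) \<Longrightarrow> (\<lambda>w. c * p w) \<in> carrier (free_alg n :: (nat list \<Rightarrow> 'k::field) ring)"
  unfolding carrier_free_alg by (auto intro: fsupp_scale)

lemma carrier_zero: "(\<lambda>w. 0) \<in> carrier (free_alg n :: (nat list \<Rightarrow> 'k::field) ring)"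
  unfolding carrier_free_alg by simp

lemma carrier_sum: "finite A \<Longrightarrow> (\<forall>i\<in>A. f i \<in> carrier (free_alg n)) \<Longrightarrow>
   (\<lambda>w. \<Sum>i\<in>A. c i * f i w) \<in> carrier (free_alg n :: (nat list \<Rightarrow> 'k::field) ring)"
proof (induction A rule: finite_induct)
  case empty then show ?case by (simp add: carrier_zero)
next
  case (insert a A)
  then show ?case using fa_add_closed[OF carrier_scale[of "f a" n "c a"], of "\<lambda>w. \<Sum>i\<in>A. c i * f i w"]
    by simp
qed

lemma carrier_sum': "finite A \<Longrightarrow> (\<forall>i\<in>A. f i \<in> carrier (free_alg n)) \<Longrightarrow>
   (\<lambda>w. \<Sum>i\<in>A. f i w) \<in> carrier (free_alg n :: (nat list \<Rightarrow> 'k::field) ring)"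
  using carrier_sum[of A f n "\<lambda>_. 1"] by simp

lemma carrier_diff: "p \<in> carrier (free_alg n) \<Longrightarrow> q \<in> carrier (free_alg n) \<Longrightarrow>
   (\<lambda>w. p w - q w) \<in> carrier (free_alg n :: (nat list \<Rightarrow> 'k::field) ring)"
  using fa_add_closed[OF _ carrier_scale[of q n "-1"], of p] by simp

lemma carrier_free_alg_mono: "m \<le> n \<Longrightarrow> p \<in> carrier (free_alg m) \<Longrightarrow> p \<in> carrier (free_alg n :: (nat list \<Rightarrow> 'k::field) ring)"
  unfolding carrier_free_alg by fastforce

lemma carrier_fsupp: "p \<in> carrier (free_alg n) \<Longrightarrow> fsupp p"
  unfolding carrier_free_alg by simp

lemma carrier_words: "p \<in> carrier (free_alg n) \<Longrightarrow> p u \<noteq> 0 \<Longrightarrow> set u \<subseteq> {1..n}"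
  unfolding carrier_free_alg by auto

lemma comm_mon: "comm (mon u) (mon v) = (\<lambda>w. mon (u@v) w - mon (v@u) w :: 'k::field)"
  unfolding comm_def by (simp add: mon_mult)

lemma comm_addL: "comm (\<lambda>w. p w + q w) r = (\<lambda>w. comm p r w + comm q r w :: 'k::field)"
  unfolding comm_def by (simp add: algebra_simps fa_mult_addL fa_mult_addR)

lemma comm_addR: "comm r (\<lambda>w. p w + q w) = (\<lambda>w. comm r p w + comm r q w :: 'k::field)"
  unfolding comm_def by (simp add: algebra_simps fa_mult_addL fa_mult_addR)

lemma comm_diffL: "comm (\<lambda>w. p w - q w) r = (\<lambda>w. comm p r w - comm q r w :: 'k::field)"
  unfolding comm_def by (simp add: algebra_simps fa_mult_diffL fa_mult_diffR)

lemma comm_diffR: "comm r (\<lambda>w. p w - q w) = (\<lambda>w. comm r p w - comm r q w :: 'k::field)"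
  unfolding comm_def by (simp add: algebra_simps fa_mult_diffL fa_mult_diffR)

lemma fsupp_comm: "fsupp p \<Longrightarrow> fsupp q \<Longrightarrow> fsupp (comm p (q::nat list \<Rightarrow> 'k::field))"
  unfolding comm_def
  using fsupp_add[of "fa_mult p q" "\<lambda>w. -1 * fa_mult q p w"] fsupp_scale[of "fa_mult q p" "-1"]
    finite_subset[OF fa_mult_supp[of p q]] finite_subset[OF fa_mult_supp[of q p]]
  by auto

lemma carrier_comm: "p \<in> carrier (free_alg n) \<Longrightarrow> q \<in> carrier (free_alg n) \<Longrightarrow>
   comm p q \<in> carrier (free_alg n :: (nat list \<Rightarrow> 'k::field) ring)"
  unfolding comm_def by (intro carrier_diff fa_mult_closed)

lemma fa_scalar_mon: "fa_scalar c = (\<lambda>w. c * mon [] w)"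
  unfolding fa_scalar_def mon_def by auto

lemma fa_scalar_carrier: "fa_scalar c \<in> carrier (free_alg n :: (nat list \<Rightarrow> 'k::field) ring)"
  unfolding fa_scalar_mon by (intro carrier_scale mon_carrier) simp

lemma fa_scalar_mult: "fa_mult (fa_scalar c) p = (\<lambda>w. c * p w :: 'k::field)"
  unfolding fa_scalar_mon fa_mult_scaleL mon_Nil fa_mult_oneL by simp

lemma free_alg_a_inv: "p \<in> carrier (free_alg n) \<Longrightarrow> \<ominus>\<^bsub>free_alg n\<^esub> p = (\<lambda>w. - p w :: 'k::field)"
proof -
  assume p: "p \<in> carrier (free_alg n)"
  interpret ring "free_alg n :: (nat list \<Rightarrow> 'k) ring" by (rule ring_free_alg)
  show ?thesis
    using p carrier_scale[OF p, of "-1"] by (intro minus_equality) (auto simp: free_alg_simps)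
qed

lemma free_alg_idealI:
  assumes sub: "K \<subseteq> carrier (free_alg n)"
    and z: "(\<lambda>w. 0) \<in> K"
    and ad: "\<And>p q. p \<in> K \<Longrightarrow> q \<in> K \<Longrightarrow> (\<lambda>w. p w + q w) \<in> K"
    and ng: "\<And>p. p \<in> K \<Longrightarrow> (\<lambda>w. - p w) \<in> K"
    and l: "\<And>p x. p \<in> K \<Longrightarrow> x \<in> carrier (free_alg n) \<Longrightarrow> fa_mult x p \<in> K"
    and r: "\<And>p x. p \<in> K \<Longrightarrow> x \<in> carrier (free_alg n) \<Longrightarrow> fa_mult p x \<in> K"
  shows "ideal K (free_alg n :: (nat list \<Rightarrow> 'k::field) ring)"
proof (rule idealI)
  show "ring (free_alg n :: (nat list \<Rightarrow> 'k::field) ring)" by (rule ring_free_alg)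
  show "subgroup K (add_monoid (free_alg n :: (nat list \<Rightarrow> 'k::field) ring))"
  proof
    show "K \<subseteq> carrier (add_monoid (free_alg n))" using sub by simp
    show "\<And>x y. x \<in> K \<Longrightarrow> y \<in> K \<Longrightarrow> x \<otimes>\<^bsub>add_monoid (free_alg n)\<^esub> y \<in> K"
      using ad by (simp add: free_alg_simps)
    show "\<one>\<^bsub>add_monoid (free_alg n)\<^esub> \<in> K" using z by (simp add: free_alg_simps)
    show "\<And>x. x \<in> K \<Longrightarrow> inv\<^bsub>add_monoid (free_alg n)\<^esub> x \<in> K"
      using ng free_alg_a_inv sub unfolding a_inv_def[symmetric] by fastforce
  qed
qed (use l r in \<open>simp_all add: free_alg_simps\<close>)

context
  fixes I :: "(nat list \<Rightarrow> 'k::field) set" and n :: nat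
  assumes I: "ideal I (free_alg n)"
begin

lemma fa_ideal_subset: "I \<subseteq> carrier (free_alg n)"
  using I by (simp add: ideal_def additive_subgroup.a_subset)

lemma fa_ideal_add: "p \<in> I \<Longrightarrow> q \<in> I \<Longrightarrow> (\<lambda>w. p w + q w) \<in> I"
  using I additive_subgroup.a_closed[of I "free_alg n"] by (simp add: ideal_def free_alg_simps)

lemma fa_ideal_zero: "(\<lambda>w. 0) \<in> I"
  using I additive_subgroup.zero_closed[of I "free_alg n"] by (simp add: ideal_def free_alg_simps)

lemma fa_ideal_scale: "p \<in> I \<Longrightarrow> (\<lambda>w. c * p w) \<in> I"
  using ideal.I_l_closed[OF I _ fa_scalar_carrier, of p c] by (simp add: free_alg_simps fa_scalar_mult)

lemma fa_ideal_neg: "p \<in> I \<Longrightarrow> (\<lambda>w. - p w) \<in> I"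
  using fa_ideal_scale[of p "-1"] by simp

lemma fa_ideal_multL: "p \<in> I \<Longrightarrow> x \<in> carrier (free_alg n) \<Longrightarrow> fa_mult x p \<in> I"
  using ideal.I_l_closed[OF I] by (simp add: free_alg_simps)

lemma fa_ideal_multR: "p \<in> I \<Longrightarrow> x \<in> carrier (free_alg n) \<Longrightarrow> fa_mult p x \<in> I"
  using ideal.I_r_closed[OF I] by (simp add: free_alg_simps)

lemma fa_ideal_sum: "finite A \<Longrightarrow> (\<forall>i\<in>A. f i \<in> I) \<Longrightarrow> (\<lambda>w. \<Sum>i\<in>A. c i * f i w) \<in> I"
proof (induction A rule: finite_induct)
  case empty then show ?case by (simp add: fa_ideal_zero)
next
  case (insert a A)
  then show ?case using fa_ideal_add[OF fa_ideal_scale[of "f a" "c a"], of "\<lambda>w. \<Sum>i\<in>A. c i * f i w"] by simp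
qed

end

lemma rcoset_fa: "I +>\<^bsub>free_alg n\<^esub> p = {(\<lambda>w. h w + p w) | h. h \<in> I} "
  unfolding a_r_coset_def' by (auto simp: free_alg_simps)

lemma carrier_quot: "carrier (free_alg n Quot I) = {I +>\<^bsub>free_alg n\<^esub> p | p. p \<in> carrier (free_alg n :: (nat list \<Rightarrow> 'k::field) ring)}"
  unfolding FactRing_def A_RCOSETS_def' by auto

context
  fixes I :: "(nat list \<Rightarrow> 'k::field) set" and n :: nat
  assumes I: "ideal I (free_alg n)"
begin

lemma coset_eq:
  assumes p: "p \<in> carrier (free_alg n)" and q: "q \<in> carrier (free_alg n)"
  shows "(I +>\<^bsub>free_alg n\<^esub> p = I +>\<^bsub>free_alg n\<^esub> q) \<longleftrightarrow> (\<lambda>w. p w - q w) \<in> I"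
  using ring.quotient_eq_iff_same_a_r_cos[OF ring_free_alg I p q] free_alg_a_inv[OF q] by (simp add: a_minus_def free_alg_simps)

lemma coset_zero: "I +>\<^bsub>free_alg n\<^esub> (\<lambda>w. 0) = I"
  unfolding rcoset_fa by auto

lemma coset_is_zero: "p \<in> carrier (free_alg n) \<Longrightarrow> (I +>\<^bsub>free_alg n\<^esub> p = I) \<longleftrightarrow> p \<in> I"
  using coset_eq[OF _ carrier_zero, of p] coset_zero by simp

lemma coset_some:
  assumes C: "C \<in> carrier (free_alg n Quot I)"
  shows "(SOME p. p \<in> C) \<in> carrier (free_alg n)" "I +>\<^bsub>free_alg n\<^esub> (SOME p. p \<in> C) = C"
proof -
  obtain q where q: "q \<in> carrier (free_alg n)" "C = I +>\<^bsub>free_alg n\<^esub> q" using C carrier_quot by blast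
  have "q \<in> C" unfolding q rcoset_fa using fa_ideal_zero[OF I] by force
  then have s: "(SOME p. p \<in> C) \<in> C" by (rule someI[of "\<lambda>p. p \<in> C" q])
  then obtain h where h: "h \<in> I" "(SOME p. p \<in> C) = (\<lambda>w. h w + q w)" unfolding q rcoset_fa by auto
  show sc: "(SOME p. p \<in> C) \<in> carrier (free_alg n)"
    unfolding h(2) using fa_add_closed[OF subsetD[OF fa_ideal_subset[OF I] h(1)] q(1)] .
  show "I +>\<^bsub>free_alg n\<^esub> (SOME p. p \<in> C) = C"
  proof -
    have "I +>\<^bsub>free_alg n\<^esub> (SOME p. p \<in> C) = I +>\<^bsub>free_alg n\<^esub> q"
      using coset_eq[OF sc q(1)] h by simp
    then show ?thesis using q(2) by simp
  qed
qed

lemma pi_hom: "(\<lambda>p. I +>\<^bsub>free_alg n\<^esub> p) \<in> ring_hom (free_alg n) (free_alg n Quot I)"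
  using ideal.rcos_ring_hom[OF I] by simp

lemma pi_carrier: "p \<in> carrier (free_alg n) \<Longrightarrow> I +>\<^bsub>free_alg n\<^esub> p \<in> carrier (free_alg n Quot I)"
  using carrier_quot by blast

lemma pi_add: "p \<in> carrier (free_alg n) \<Longrightarrow> q \<in> carrier (free_alg n) \<Longrightarrow>
  I +>\<^bsub>free_alg n\<^esub> (\<lambda>w. p w + q w) = (I +>\<^bsub>free_alg n\<^esub> p) \<oplus>\<^bsub>free_alg n Quot I\<^esub> (I +>\<^bsub>free_alg n\<^esub> q)"
  using ring_hom_add[OF pi_hom] by (simp add: free_alg_simps)

lemma pi_mult: "p \<in> carrier (free_alg n) \<Longrightarrow> q \<in> carrier (free_alg n) \<Longrightarrow>
  I +>\<^bsub>free_alg n\<^esub> (fa_mult p q) = (I +>\<^bsub>free_alg n\<^esub> p) \<otimes>\<^bsub>free_alg n Quot I\<^esub> (I +>\<^bsub>free_alg n\<^esub> q)"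
  using ring_hom_mult[OF pi_hom] by (simp add: free_alg_simps)

lemma pi_one: "I +>\<^bsub>free_alg n\<^esub> (mon []) = \<one>\<^bsub>free_alg n Quot I\<^esub>"
  using ring_hom_one[OF pi_hom] by (simp add: free_alg_simps mon_Nil)

lemma quot_zero: "\<zero>\<^bsub>free_alg n Quot I\<^esub> = I"
  by (simp add: FactRing_def)

lemma quot_ring: "ring (free_alg n Quot I)"
  by (rule ideal.quotient_is_ring[OF I])

lemma pi_finsum: "finite A \<Longrightarrow> (\<forall>a\<in>A. F a \<in> carrier (free_alg n)) \<Longrightarrow>
  finsum (free_alg n Quot I) (\<lambda>a. I +>\<^bsub>free_alg n\<^esub> F a) A = I +>\<^bsub>free_alg n\<^esub> (\<lambda>w. \<Sum>a\<in>A. F a w)"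
proof (induction A rule: finite_induct)
  case empty
  interpret Q: ring "free_alg n Quot I" by (rule quot_ring)
  show ?case by (simp add: coset_zero quot_zero)
next
  case (insert a A)
  interpret Q: ring "free_alg n Quot I" by (rule quot_ring)
  have "finsum (free_alg n Quot I) (\<lambda>a. I +>\<^bsub>free_alg n\<^esub> F a) (insert a A)
      = (I +>\<^bsub>free_alg n\<^esub> F a) \<oplus>\<^bsub>free_alg n Quot I\<^esub> finsum (free_alg n Quot I) (\<lambda>a. I +>\<^bsub>free_alg n\<^esub> F a) A"
    using insert by (intro Q.finsum_insert) (auto intro: pi_carrier)
  also have "\<dots> = (I +>\<^bsub>free_alg n\<^esub> F a) \<oplus>\<^bsub>free_alg n Quot I\<^esub> (I +>\<^bsub>free_alg n\<^esub> (\<lambda>w. \<Sum>a\<in>A. F a w))"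
    using insert by simp
  also have "\<dots> = I +>\<^bsub>free_alg n\<^esub> (\<lambda>w. F a w + (\<Sum>a\<in>A. F a w))"
    using insert by (intro pi_add[symmetric]) (auto intro: carrier_sum')
  finally show ?case using insert by simp
qed

lemma pi_add_pow: "p \<in> carrier (free_alg n) \<Longrightarrow>
  add_pow (free_alg n Quot I) (k::nat) (I +>\<^bsub>free_alg n\<^esub> p) = I +>\<^bsub>free_alg n\<^esub> (\<lambda>w. of_nat k * p w)"
proof (induction k)
  case 0 then show ?case by (simp add: add_pow_def coset_zero quot_zero)
next
  case (Suc k)
  have "add_pow (free_alg n Quot I) (Suc k) (I +>\<^bsub>free_alg n\<^esub> p)
     = add_pow (free_alg n Quot I) k (I +>\<^bsub>free_alg n\<^esub> p) \<oplus>\<^bsub>free_alg n Quot I\<^esub> (I +>\<^bsub>free_alg n\<^esub> p)"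
    by (simp add: add_pow_def)
  also have "\<dots> = I +>\<^bsub>free_alg n\<^esub> (\<lambda>w. of_nat k * p w + p w)"
    using Suc by (simp add: pi_add[symmetric] carrier_scale)
  finally show ?case by (simp add: algebra_simps)
qed

end

definition lin_ext :: "(nat list \<Rightarrow> 'x \<Rightarrow> 'k::field) \<Rightarrow> (nat list \<Rightarrow> 'k) \<Rightarrow> 'x \<Rightarrow> 'k" where
  "lin_ext F p = (\<lambda>x. \<Sum>u\<in>{u. p u \<noteq> 0}. p u * F u x)"

lemma der_ext_lin_ext: "der_ext D = lin_ext (der_word D)"
  unfolding der_ext_def lin_ext_def by (rule ext) simp

lemma lin_ext_supp: "finite S \<Longrightarrow> {u. p u \<noteq> 0} \<subseteq> S \<Longrightarrow> lin_ext F p x = (\<Sum>u\<in>S. p u * F u x)"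
  unfolding lin_ext_def by (rule sum.mono_neutral_left) auto

lemma lin_ext_add: "fsupp p \<Longrightarrow> fsupp q \<Longrightarrow> lin_ext F (\<lambda>w. p w + q w) x = lin_ext F p x + lin_ext F q x"
proof -
  assume p: "fsupp p" and q: "fsupp q"
  let ?S = "{w. p w \<noteq> 0} \<union> {w. q w \<noteq> 0}"
  have "lin_ext F (\<lambda>w. p w + q w) x = (\<Sum>u\<in>?S. (p u + q u) * F u x)"
    using p q by (intro lin_ext_supp) auto
  also have "\<dots> = (\<Sum>u\<in>?S. p u * F u x) + (\<Sum>u\<in>?S. q u * F u x)"
    by (simp add: ring_distribs sum.distrib)
  also have "\<dots> = lin_ext F p x + lin_ext F q x"
    using p q lin_ext_supp[of ?S p F x] lin_ext_supp[of ?S q F x] by auto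
  finally show ?thesis .
qed

lemma lin_ext_scale: "lin_ext F (\<lambda>w. c * p w) x = c * lin_ext F p x"
proof (cases "c = 0")
  case True then show ?thesis by (simp add: lin_ext_def)
next
  case False
  then have "{u. c * p u \<noteq> 0} = {u. p u \<noteq> 0}" by auto
  then show ?thesis unfolding lin_ext_def by (simp add: sum_distrib_left mult.assoc)
qed

lemma lin_ext_sum: "finite A \<Longrightarrow> (\<forall>i\<in>A. fsupp (f i)) \<Longrightarrow>
   lin_ext F (\<lambda>w. \<Sum>i\<in>A. c i * f i w) x = (\<Sum>i\<in>A. c i * lin_ext F (f i) x)"
proof (induction A rule: finite_induct)
  case empty then show ?case by (simp add: lin_ext_def)
next
  case (insert a A)
  have "lin_ext F (\<lambda>w. \<Sum>i\<in>insert a A. c i * f i w) x = lin_ext F (\<lambda>w. c a * f a w + (\<Sum>i\<in>A. c i * f i w)) x"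
    using insert by simp
  also have "\<dots> = lin_ext F (\<lambda>w. c a * f a w) x + lin_ext F (\<lambda>w. \<Sum>i\<in>A. c i * f i w) x"
    using insert by (intro lin_ext_add fsupp_scale fsupp_sum) auto
  finally show ?case using insert by (simp add: lin_ext_scale)
qed

lemma lin_ext_zero: "lin_ext F (\<lambda>w. 0) x = 0"
  by (simp add: lin_ext_def)

lemma lin_ext_mon: "lin_ext F (mon u) x = F u x"
  by (simp add: lin_ext_def supp_mon) (simp add: mon_def)

lemma lin_ext_mon_self: "fsupp p \<Longrightarrow> lin_ext mon p w = (p w :: 'k::field)"
  unfolding lin_ext_def mon_def
  by (simp add: if_distrib sum.delta' cong: if_cong)

lemma fsupp_eq_sum_mon: "fsupp q \<Longrightarrow> q = (\<lambda>x. \<Sum>v\<in>{v. q v \<noteq> 0}. q v * mon v x :: 'k::field)"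
  using lin_ext_mon_self[of q] unfolding lin_ext_def by auto

lemma fa_mult_eq_sum_mon:
  fixes p q :: "nat list \<Rightarrow> 'k::field"
  assumes p: "fsupp p" and q: "fsupp q"
  shows "fa_mult p q = (\<lambda>w. \<Sum>u\<in>{u. p u \<noteq> 0}. p u * (\<Sum>v\<in>{v. q v \<noteq> 0}. q v * mon (u @ v) w))"
proof -
  have "fa_mult p q = fa_mult (\<lambda>x. \<Sum>u\<in>{u. p u \<noteq> 0}. p u * mon u x) (\<lambda>x. \<Sum>v\<in>{v. q v \<noteq> 0}. q v * mon v x)"
    by (simp only: fsupp_eq_sum_mon[OF p, symmetric] fsupp_eq_sum_mon[OF q, symmetric])
  then show ?thesis by (simp only: fa_mult_sumL fa_mult_sumR mon_mult)
qed

lemma lin_ext_mult: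
  fixes p q :: "nat list \<Rightarrow> 'k::field"
  assumes p: "fsupp p" and q: "fsupp q"
  shows "lin_ext F (fa_mult p q) x = (\<Sum>u\<in>{u. p u \<noteq> 0}. \<Sum>v\<in>{v. q v \<noteq> 0}. p u * q v * F (u @ v) x)"
proof -
  have inner: "fsupp (\<lambda>w. \<Sum>v\<in>{v. q v \<noteq> 0}. q v * mon (u @ v) w)" for u
    using q by (intro fsupp_sum) (auto simp: supp_mon)
  have "lin_ext F (fa_mult p q) x
      = (\<Sum>u\<in>{u. p u \<noteq> 0}. p u * lin_ext F (\<lambda>w. \<Sum>v\<in>{v. q v \<noteq> 0}. q v * mon (u @ v) w) x)"
    unfolding fa_mult_eq_sum_mon[OF p q] using p inner by (intro lin_ext_sum) auto
  also have "\<dots> = (\<Sum>u\<in>{u. p u \<noteq> 0}. p u * (\<Sum>v\<in>{v. q v \<noteq> 0}. q v * F (u @ v) x))"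
    using q by (simp add: lin_ext_sum supp_mon lin_ext_mon)
  finally show ?thesis by (simp add: sum_distrib_left mult.assoc)
qed

lemma sum_lessThan_add: "(\<Sum>i<m+(n::nat). f i) = (\<Sum>i<m. f i) + (\<Sum>i<n. (f (m+i) :: 'a::comm_monoid_add))"
  by (induction n) (simp_all add: add.assoc)

lemma der_word_Nil: "der_word D [] = (\<lambda>w. 0)"
  unfolding der_word_def by simp

lemma der_word_append:
  "der_word D (u @ v) = (\<lambda>w. fa_mult (der_word D u) (mon v) w + fa_mult (mon u) (der_word D v) (w::nat list) :: 'k::field)"
proof (rule ext)
  fix w
  define T where "T = (\<lambda>u i. fa_mult (fa_mult (mon (take i u)) (D (u ! i))) (mon (drop (Suc i) u)))"
  have dw: "\<And>u. der_word D u = (\<lambda>w. \<Sum>i<length u. T u i w)"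
    unfolding der_word_def T_def by simp
  have 1: "T (u @ v) i = fa_mult (T u i) (mon v)" if "i < length u" for i
    using that unfolding T_def by (simp add: fa_mult_assoc mon_mult nth_append)
  have 2: "T (u @ v) (length u + j) = fa_mult (mon u) (T v j)" for j
    unfolding T_def
    by (simp add: fa_mult_assoc[symmetric] mon_mult[symmetric] nth_append)
  have "der_word D (u @ v) w = (\<Sum>i<length u. T (u@v) i w) + (\<Sum>j<length v. T (u@v) (length u + j) w)"
    unfolding dw by (simp add: sum_lessThan_add)
  also have "\<dots> = (\<Sum>i<length u. fa_mult (T u i) (mon v) w) + (\<Sum>j<length v. fa_mult (mon u) (T v j) w)"
    using 1 2 by simp
  also have "\<dots> = fa_mult (der_word D u) (mon v) w + fa_mult (mon u) (der_word D v) w"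
    unfolding dw fa_mult_sumL' fa_mult_sumR' by simp
  finally show "der_word D (u @ v) w = fa_mult (der_word D u) (mon v) w + fa_mult (mon u) (der_word D v) w" .
qed

lemma der_word_single: "der_word D [a] = (D a :: nat list \<Rightarrow> 'k::field)"
  unfolding der_word_def by (simp add: mon_Nil fa_mult_oneL fa_mult_oneR)

lemma der_word_Cons: "der_word D (a # u) = (\<lambda>w. fa_mult (D a) (mon u) w + fa_mult (gen a) (der_word D u) w :: 'k::field)"
  using der_word_append[of D "[a]" u] by (simp add: der_word_single gen_mon)

lemma der_word_closed: "set u \<subseteq> {1..n} \<Longrightarrow> (\<forall>i\<in>{1..n}. D i \<in> carrier (free_alg n)) \<Longrightarrow>
  (der_word D u :: nat list \<Rightarrow> 'k::field) \<in> carrier (free_alg n)"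
proof (induction u)
  case Nil then show ?case by (simp add: der_word_Nil carrier_zero)
next
  case (Cons a u)
  then show ?case unfolding der_word_Cons
    by (intro fa_add_closed fa_mult_closed mon_carrier gen_carrier) auto
qed

lemma der_ext_closed:
  assumes "p \<in> carrier (free_alg n)" "\<forall>i\<in>{1..n}. D i \<in> carrier (free_alg n)"
  shows "(der_ext D p :: nat list \<Rightarrow> 'k::field) \<in> carrier (free_alg n)"
proof -
  have "der_ext D p = (\<lambda>w. \<Sum>u\<in>{u. p u \<noteq> 0}. p u * der_word D u w)"
    unfolding der_ext_def by simp
  also have "\<dots> \<in> carrier (free_alg n)"
  proof -
    have fin: "finite {u. p u \<noteq> 0}" and st: "\<And>u. p u \<noteq> 0 \<Longrightarrow> set u \<subseteq> {1..n}"
      using assms(1) unfolding carrier_free_alg by auto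
    show ?thesis by (intro carrier_sum fin ballI der_word_closed assms(2) st) simp
  qed
  finally show ?thesis .
qed

lemma der_ext_add: "fsupp p \<Longrightarrow> fsupp q \<Longrightarrow> der_ext D (\<lambda>w. p w + q w) = (\<lambda>w. der_ext D p w + der_ext D q w :: 'k::field)"
  unfolding der_ext_lin_ext by (rule ext) (rule lin_ext_add)

lemma der_ext_scale: "der_ext D (\<lambda>w. c * p w) = (\<lambda>w. c * der_ext D p w :: 'k::field)"
  unfolding der_ext_lin_ext by (rule ext) (rule lin_ext_scale)

lemma der_ext_sum: "finite A \<Longrightarrow> (\<forall>i\<in>A. fsupp (f i)) \<Longrightarrow>
   der_ext D (\<lambda>w. \<Sum>i\<in>A. c i * f i w) = (\<lambda>w. \<Sum>i\<in>A. c i * der_ext D (f i) w :: 'k::field)"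
  unfolding der_ext_lin_ext by (rule ext) (rule lin_ext_sum)

lemma der_ext_mon: "der_ext D (mon u) = (der_word D u :: nat list \<Rightarrow> 'k::field)"
  unfolding der_ext_lin_ext by (rule ext) (rule lin_ext_mon)

lemma der_ext_gen: "der_ext D (gen a) = (D a :: nat list \<Rightarrow> 'k::field)"
  by (simp add: gen_mon der_ext_mon der_word_single)

lemma der_ext_zero: "der_ext D (\<lambda>w. 0) = (\<lambda>w. 0 :: 'k::field)"
  unfolding der_ext_def by simp

lemma der_ext_diff: "fsupp p \<Longrightarrow> fsupp q \<Longrightarrow> der_ext D (\<lambda>w. p w - q w) = (\<lambda>w. der_ext D p w - der_ext D q w :: 'k::field)"
  using der_ext_add[of p "\<lambda>w. -1 * q w" D] der_ext_scale[of D "-1" q] fsupp_scale[of q "-1"] by simp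

lemma der_ext_mult:
  fixes p q :: "nat list \<Rightarrow> 'k::field"
  assumes p: "fsupp p" and q: "fsupp q"
  shows "der_ext D (fa_mult p q) = (\<lambda>w. fa_mult (der_ext D p) q w + fa_mult p (der_ext D q) w)"
proof (rule ext)
  fix w
  let ?Sp = "{u. p u \<noteq> 0}" and ?Sq = "{v. q v \<noteq> 0}"
  have "der_ext D (fa_mult p q) w = (\<Sum>u\<in>?Sp. \<Sum>v\<in>?Sq. p u * q v * der_word D (u @ v) w)"
    unfolding der_ext_lin_ext using p q by (intro lin_ext_mult) auto
  also have "\<dots> = (\<Sum>u\<in>?Sp. \<Sum>v\<in>?Sq. p u * q v * fa_mult (der_word D u) (mon v) w)
       + (\<Sum>u\<in>?Sp. \<Sum>v\<in>?Sq. p u * q v * fa_mult (mon u) (der_word D v) w)"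
    by (simp add: der_word_append ring_distribs sum.distrib)
  also have "(\<Sum>u\<in>?Sp. \<Sum>v\<in>?Sq. p u * q v * fa_mult (der_word D u) (mon v) w) = fa_mult (der_ext D p) q w"
  proof -
    have "fa_mult (der_ext D p) q = fa_mult (\<lambda>x. \<Sum>u\<in>?Sp. p u * der_word D u x) (\<lambda>x. \<Sum>v\<in>?Sq. q v * mon v x)"
      unfolding der_ext_def by (subst fsupp_eq_sum_mon[OF q]) simp
    then show ?thesis
      by (simp add: fa_mult_sumL fa_mult_sumR sum_distrib_left mult.assoc)
  qed
  also have "(\<Sum>u\<in>?Sp. \<Sum>v\<in>?Sq. p u * q v * fa_mult (mon u) (der_word D v) w) = fa_mult p (der_ext D q) w"
  proof -
    have "fa_mult p (der_ext D q) = fa_mult (\<lambda>x. \<Sum>u\<in>?Sp. p u * mon u x) (\<lambda>x. \<Sum>v\<in>?Sq. q v * der_word D v x)"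
      unfolding der_ext_def by (subst (1) fsupp_eq_sum_mon[OF p]) simp
    then show ?thesis
      by (simp add: fa_mult_sumL fa_mult_sumR sum_distrib_left mult.assoc)
  qed
  finally show "der_ext D (fa_mult p q) w = fa_mult (der_ext D p) q w + fa_mult p (der_ext D q) w" .
qed

lemma der_ext_comm: "fsupp p \<Longrightarrow> fsupp q \<Longrightarrow>
  der_ext D (comm p q) = (\<lambda>w. comm (der_ext D p) q w + comm p (der_ext D q) w :: 'k::field)"
  unfolding comm_def
  by (simp add: der_ext_diff fsupp_mult der_ext_mult) (rule ext, simp add: algebra_simps)

lemma der_ext_genideal:
  fixes S :: "(nat list \<Rightarrow> 'k::field) set"
  assumes D: "\<forall>i\<in>{1..n}. D i \<in> carrier (free_alg n)" and S: "S \<subseteq> carrier (free_alg n)"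
    and DS: "\<And>s. s \<in> S \<Longrightarrow> der_ext D s \<in> genideal (free_alg n) S"
    and p: "p \<in> genideal (free_alg n) S"
  shows "der_ext D p \<in> genideal (free_alg n) S"
proof -
  let ?I = "genideal (free_alg n) S"
  have I: "ideal ?I (free_alg n)" by (rule ring.genideal_ideal[OF ring_free_alg S])
  let ?K = "{p \<in> ?I. der_ext D p \<in> ?I}"
  have fs: "fsupp p" if "p \<in> ?I" for p using that fa_ideal_subset[OF I] carrier_fsupp by blast
  have Dc: "x \<in> carrier (free_alg n) \<Longrightarrow> der_ext D x \<in> carrier (free_alg n)" for x
    using der_ext_closed D by blast
  have "ideal ?K (free_alg n)"
  proof (rule free_alg_idealI)
    show "?K \<subseteq> carrier (free_alg n)" using fa_ideal_subset[OF I] by auto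
    show "(\<lambda>w. 0) \<in> ?K" using fa_ideal_zero[OF I] by (simp add: der_ext_zero)
    show "(\<lambda>w. p w + q w) \<in> ?K" if "p \<in> ?K" "q \<in> ?K" for p q
      using that fa_ideal_add[OF I] fs by (simp add: der_ext_add)
    show "(\<lambda>w. - p w) \<in> ?K" if "p \<in> ?K" for p
      using that fa_ideal_neg[OF I] der_ext_scale[of D "-1" p] by simp
    show "fa_mult x p \<in> ?K" "fa_mult p x \<in> ?K" if "p \<in> ?K" and x: "x \<in> carrier (free_alg n)" for p x
    proof -
      from that have p: "p \<in> ?I" "der_ext D p \<in> ?I" by auto
      show "fa_mult x p \<in> ?K"
        using fa_ideal_multL[OF I p(1) x] fa_ideal_multL[OF I p(1) Dc[OF x]] fa_ideal_multL[OF I p(2) x]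
        by (simp add: der_ext_mult[OF carrier_fsupp[OF x] fs[OF p(1)]] fa_ideal_add[OF I])
      show "fa_mult p x \<in> ?K"
        using fa_ideal_multR[OF I p(1) x] fa_ideal_multR[OF I p(1) Dc[OF x]] fa_ideal_multR[OF I p(2) x]
        by (simp add: der_ext_mult[OF fs[OF p(1)] carrier_fsupp[OF x]] fa_ideal_add[OF I])
    qed
  qed
  moreover have "S \<subseteq> ?K" using DS ring.genideal_self[OF ring_free_alg S] by auto
  ultimately have "?I \<subseteq> ?K" by (rule ring.genideal_minimal[OF ring_free_alg])
  then show ?thesis using p by auto
qed

lemma delta_gen_carrier: "i \<in> {1..6} \<Longrightarrow> (delta_gen i :: nat list \<Rightarrow> 'k::field) \<in> carrier (free_alg 6)"
  unfolding delta_gen_def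
  by (auto intro!: fa_add_closed carrier_comm gen_carrier)

lemma delta_carrier: "p \<in> carrier (free_alg 6) \<Longrightarrow> (delta p :: nat list \<Rightarrow> 'k::field) \<in> carrier (free_alg 6)"
  unfolding delta_def by (rule der_ext_closed) (auto intro: delta_gen_carrier)

lemma delta_zero: "delta (\<lambda>w. 0) = (\<lambda>w. 0 :: 'k::field)"
  by (simp add: delta_def der_ext_zero)

lemma delta_sum: "finite A \<Longrightarrow> (\<forall>i\<in>A. fsupp (f i)) \<Longrightarrow>
   delta (\<lambda>w. \<Sum>i\<in>A. f i w) = (\<lambda>w. \<Sum>i\<in>A. delta (f i) w :: 'k::field)"
  unfolding delta_def using der_ext_sum[of A f D "\<lambda>_. 1" for D] by simp

lemma delta_mult: "fsupp p \<Longrightarrow> fsupp q \<Longrightarrow>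
  delta (fa_mult p q) = (\<lambda>w. fa_mult (delta p) q w + fa_mult p (delta q) (w::nat list) :: 'k::field)"
  unfolding delta_def by (rule der_ext_mult)

lemma delta_add: "fsupp p \<Longrightarrow> fsupp q \<Longrightarrow> delta (\<lambda>w. p w + q w) = (\<lambda>w. delta p w + delta q w :: 'k::field)"
  unfolding delta_def by (rule der_ext_add)

lemma delta_scale: "delta (\<lambda>w. c * p w) = (\<lambda>w. c * delta p w :: 'k::field)"
  unfolding delta_def by (rule der_ext_scale)

lemma delta_diff: "fsupp p \<Longrightarrow> fsupp q \<Longrightarrow> delta (\<lambda>w. p w - q w) = (\<lambda>w. delta p w - delta q w :: 'k::field)"
  unfolding delta_def by (rule der_ext_diff)

lemma delta_gen_eq: "delta (gen i) = delta_gen i"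
  unfolding delta_def by (rule der_ext_gen)

lemma delta_mon_Nil: "delta (mon []) = (\<lambda>w. 0 :: 'k::field)"
  unfolding delta_def by (simp add: der_ext_mon der_word_Nil)

lemma delta_pow_carrier: "p \<in> carrier (free_alg 6) \<Longrightarrow> (delta ^^ k) p \<in> carrier (free_alg 6 :: (nat list \<Rightarrow> 'k::field) ring)"
  by (induction k) (auto intro: delta_carrier)

lemma delta_pow_zero: "(delta ^^ k) (\<lambda>w. 0) = (\<lambda>w. 0 :: 'k::field)"
  by (induction k) (simp_all add: delta_zero)

lemma delta_relB: "delta (relB :: nat list \<Rightarrow> 'k::field) = (\<lambda>w. 0)"
proof -
  have "delta (relB :: nat list \<Rightarrow> 'k::field) = (\<lambda>w.
      comm (delta_gen 1) (gen 6) w + comm (gen 1) (delta_gen 6) w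
    + (comm (delta_gen 5) (gen 2) w + comm (gen 5) (delta_gen 2) w)
    + (comm (delta_gen 4) (gen 3) w + comm (gen 4) (delta_gen 3) w))"
    unfolding relB_def delta_def
    by (simp add: der_ext_add fsupp_comm fsupp_gen fsupp_add der_ext_comm der_ext_gen)
  also have "\<dots> = (\<lambda>w. 0)"
    unfolding delta_gen_def
    by (simp add: gen_mon comm_mon comm_addL comm_addR comm_diffL comm_diffR)
  finally show ?thesis .
qed

text \<open>The Ore relation \<open>X b = b X + \<delta>(b)\<close> for \<open>b = x\<^sub>a\<close>, with \<open>x\<^sub>7\<close> in the role of \<open>X\<close>.\<close>

definition ore_rel :: "nat \<Rightarrow> nat list \<Rightarrow> 'k::field" where
  "ore_rel a = (\<lambda>w. comm (gen 7) (gen a) w - delta_gen a w)"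

lemma relA_ore_rel:
  "relA 6 = ore_rel 1" "relA 5 = (\<lambda>w. - ore_rel 2 w)" "relA 4 = (\<lambda>w. - ore_rel 3 w)"
  "relA 3 = ore_rel 4" "relA 2 = ore_rel 5" "relA 1 = (\<lambda>w. - ore_rel 6 w)"
  unfolding relA_def ore_rel_def delta_gen_def
  by (simp_all add: gen_mon comm_mon) (rule ext, simp add: algebra_simps)+

lemma relA_7: "relA 7 = relB"
  unfolding relA_def relB_def by (simp add: algebra_simps)

lemma relA_carrier: "relA ` {1..7} \<subseteq> carrier (free_alg 7 :: (nat list \<Rightarrow> 'k::field) ring)"
  unfolding relA_def by (auto intro!: fa_add_closed carrier_comm gen_carrier)

lemma relB_carrier: "relB \<in> carrier (free_alg 6 :: (nat list \<Rightarrow> 'k::field) ring)"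
  unfolding relB_def by (auto intro!: fa_add_closed carrier_comm gen_carrier)

lemma idealA_ideal: "ideal (idealA :: (nat list \<Rightarrow> 'k::field) set) (free_alg 7)"
  unfolding idealA_def by (rule ring.genideal_ideal[OF ring_free_alg relA_carrier])

lemma idealB_ideal: "ideal (idealB :: (nat list \<Rightarrow> 'k::field) set) (free_alg 6)"
  unfolding idealB_def by (rule ring.genideal_ideal[OF ring_free_alg]) (simp add: relB_carrier)

lemma relA_idealA: "j \<in> {1..7} \<Longrightarrow> relA j \<in> (idealA :: (nat list \<Rightarrow> 'k::field) set)"
  unfolding idealA_def using ring.genideal_self[OF ring_free_alg relA_carrier] by blast

lemma relB_idealB: "relB \<in> (idealB :: (nat list \<Rightarrow> 'k::field) set)"
  unfolding idealB_def using ring.genideal_self'[OF ring_free_alg relB_carrier] by blast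

lemma idealB_idealA: "idealB \<subseteq> (idealA :: (nat list \<Rightarrow> 'k::field) set)"
proof -
  let ?K = "idealA \<inter> carrier (free_alg 6) :: (nat list \<Rightarrow> 'k::field) set"
  have "ideal ?K (free_alg 6)"
  proof (rule free_alg_idealI)
    show "(\<lambda>w. 0) \<in> ?K" by (simp add: fa_ideal_zero[OF idealA_ideal] carrier_zero)
    show "fa_mult x p \<in> ?K" if "p \<in> ?K" "x \<in> carrier (free_alg 6)" for p x
      using that fa_ideal_multL[OF idealA_ideal, of p x] carrier_free_alg_mono[of 6 7 x] fa_mult_closed[of x 6 p] by auto
    show "fa_mult p x \<in> ?K" if "p \<in> ?K" "x \<in> carrier (free_alg 6)" for p x
      using that fa_ideal_multR[OF idealA_ideal, of p x] carrier_free_alg_mono[of 6 7 x] fa_mult_closed[of p 6 x] by auto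
  qed (auto intro: fa_ideal_add[OF idealA_ideal] fa_ideal_neg[OF idealA_ideal] fa_add_closed carrier_scale[of _ _ "-1", simplified]
      fa_ideal_multL[OF idealA_ideal] fa_ideal_multR[OF idealA_ideal] carrier_free_alg_mono[of 6 7] fa_mult_closed)
  moreover have "{relB} \<subseteq> ?K" using relA_idealA[of 7, where 'k='k] relA_7[where 'a='k] relB_carrier[where 'k='k] by auto
  ultimately have "idealB \<subseteq> ?K" unfolding idealB_def by (rule ring.genideal_minimal[OF ring_free_alg])
  then show ?thesis by auto
qed

lemma delta_idealB: "p \<in> idealB \<Longrightarrow> delta p \<in> (idealB :: (nat list \<Rightarrow> 'k::field) set)"
  unfolding idealB_def delta_def
proof (rule der_ext_genideal)
  show "\<forall>i\<in>{1..6}. delta_gen i \<in> carrier (free_alg 6 :: (nat list \<Rightarrow> 'k) ring)"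
    using delta_gen_carrier by blast
  show "der_ext delta_gen s \<in> genideal (free_alg 6) {relB}" if "s \<in> {relB}" for s :: "nat list \<Rightarrow> 'k"
    using that delta_relB[where 'k='k] fa_ideal_zero[OF idealB_ideal[where 'k='k]] unfolding idealB_def delta_def by simp
qed (use relB_carrier in auto)

lemma delta_pow_idealB: "p \<in> idealB \<Longrightarrow> (delta ^^ k) p \<in> (idealB :: (nat list \<Rightarrow> 'k::field) set)"
  by (induction k) (auto intro: delta_idealB)

abbreviation piB :: "(nat list \<Rightarrow> 'k::field) \<Rightarrow> (nat list \<Rightarrow> 'k) set" where
  "piB p \<equiv> idealB +>\<^bsub>free_alg 6\<^esub> p"

lemma ring_B_alg: "ring (B_alg :: ((nat list \<Rightarrow> 'k::field) set) ring)"
  unfolding B_alg_def by (rule quot_ring[OF idealB_ideal])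

lemma piB_carrier: "p \<in> carrier (free_alg 6) \<Longrightarrow> piB p \<in> carrier (B_alg :: ((nat list \<Rightarrow> 'k::field) set) ring)"
  unfolding B_alg_def by (rule pi_carrier[OF idealB_ideal])

lemma carrier_B_alg: "C \<in> carrier (B_alg :: ((nat list \<Rightarrow> 'k::field) set) ring) \<Longrightarrow> \<exists>p\<in>carrier (free_alg 6). C = piB p"
  unfolding B_alg_def carrier_quot by blast

lemma piB_eq: "p \<in> carrier (free_alg 6) \<Longrightarrow> q \<in> carrier (free_alg 6) \<Longrightarrow>
   (piB p = piB q) \<longleftrightarrow> (\<lambda>w. p w - q w) \<in> (idealB :: (nat list \<Rightarrow> 'k::field) set)"
  by (rule coset_eq[OF idealB_ideal])

lemma zero_B_alg: "\<zero>\<^bsub>B_alg\<^esub> = (idealB :: (nat list \<Rightarrow> 'k::field) set)"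
  unfolding B_alg_def by (rule quot_zero[OF idealB_ideal])

lemma piB_zero: "piB (\<lambda>w. 0) = (idealB :: (nat list \<Rightarrow> 'k::field) set)"
  by (rule coset_zero[OF idealB_ideal])

lemma piB_is_zero: "p \<in> carrier (free_alg 6) \<Longrightarrow> (piB p = \<zero>\<^bsub>B_alg\<^esub>) \<longleftrightarrow> p \<in> (idealB :: (nat list \<Rightarrow> 'k::field) set)"
  unfolding zero_B_alg by (rule coset_is_zero[OF idealB_ideal])

lemma piB_add: "p \<in> carrier (free_alg 6) \<Longrightarrow> q \<in> carrier (free_alg 6) \<Longrightarrow>
   piB (\<lambda>w. p w + q w) = piB p \<oplus>\<^bsub>B_alg\<^esub> piB (q :: nat list \<Rightarrow> 'k::field)"
  unfolding B_alg_def by (rule pi_add[OF idealB_ideal])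

lemma piB_mult: "p \<in> carrier (free_alg 6) \<Longrightarrow> q \<in> carrier (free_alg 6) \<Longrightarrow>
   piB (fa_mult p q) = piB p \<otimes>\<^bsub>B_alg\<^esub> piB (q :: nat list \<Rightarrow> 'k::field)"
  unfolding B_alg_def by (rule pi_mult[OF idealB_ideal])

lemma piB_one: "piB (mon []) = \<one>\<^bsub>B_alg\<^esub>"
  unfolding B_alg_def by (rule pi_one[OF idealB_ideal])

lemma piB_some: "C \<in> carrier (B_alg :: ((nat list \<Rightarrow> 'k::field) set) ring) \<Longrightarrow>
   (SOME p. p \<in> C) \<in> carrier (free_alg 6) \<and> piB (SOME p. p \<in> C) = C"
  unfolding B_alg_def using coset_some[OF idealB_ideal] by blast

lemma add_pow_piB: "p \<in> carrier (free_alg 6) \<Longrightarrow>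
  add_pow B_alg (k::nat) (piB p) = piB (\<lambda>w. of_nat k * (p w :: 'k::field))"
  unfolding B_alg_def by (rule pi_add_pow[OF idealB_ideal])

lemma finsum_piB: "finite A \<Longrightarrow> (\<forall>a\<in>A. F a \<in> carrier (free_alg 6)) \<Longrightarrow>
  finsum B_alg (\<lambda>a. piB (F a)) A = piB (\<lambda>w. \<Sum>a\<in>A. (F a w :: 'k::field))"
  unfolding B_alg_def by (rule pi_finsum[OF idealB_ideal])

lemma delta_B_piB: "q \<in> carrier (free_alg 6) \<Longrightarrow> delta_B (piB q) = piB (delta (q :: nat list \<Rightarrow> 'k::field))"
proof -
  assume q: "q \<in> carrier (free_alg 6)"
  define p where "p = (SOME p. p \<in> piB q)"
  have pc: "p \<in> carrier (free_alg 6)" and pe: "piB p = piB q"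
    using piB_some[OF piB_carrier[OF q]] unfolding p_def by auto
  have d: "(\<lambda>w. p w - q w) \<in> idealB" using pe piB_eq[OF pc q] by simp
  have "delta (\<lambda>w. p w - q w) = (\<lambda>w. delta p w - delta q w)"
    by (rule delta_diff) (use pc q carrier_fsupp in auto)
  then have "(\<lambda>w. delta p w - delta q w) \<in> idealB" using delta_idealB[OF d] by simp
  then have "piB (delta p) = piB (delta q)"
    using piB_eq[OF delta_carrier[OF pc] delta_carrier[OF q]] by simp
  then show ?thesis unfolding delta_B_def induced_map_def p_def by simp
qed

lemma delta_B_pow_piB: "q \<in> carrier (free_alg 6) \<Longrightarrow> (delta_B ^^ k) (piB q) = piB ((delta ^^ k) (q :: nat list \<Rightarrow> 'k::field))"
  by (induction k) (simp_all add: delta_B_piB delta_pow_carrier)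

lemma delta_B_is_k_derivation: "is_k_derivation (B_alg :: ((nat list \<Rightarrow> 'k::field) set) ring) B_emb delta_B"
  unfolding is_k_derivation_def
proof (intro conjI ballI allI)
  show "delta_B \<in> carrier (B_alg :: ((nat list \<Rightarrow> 'k) set) ring) \<rightarrow> carrier B_alg"
    by (auto dest!: carrier_B_alg simp: delta_B_piB piB_carrier delta_carrier)
next
  fix C D :: "(nat list \<Rightarrow> 'k) set" assume C: "C \<in> carrier B_alg" and D: "D \<in> carrier B_alg"
  obtain p q where p: "p \<in> carrier (free_alg 6)" "C = piB p" and q: "q \<in> carrier (free_alg 6)" "D = piB q"
    using carrier_B_alg[OF C] carrier_B_alg[OF D] by blast
  note fs = carrier_fsupp[OF p(1)] carrier_fsupp[OF q(1)]
  show "delta_B (C \<oplus>\<^bsub>B_alg\<^esub> D) = delta_B C \<oplus>\<^bsub>B_alg\<^esub> delta_B D"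
    unfolding p(2) q(2)
    by (simp add: piB_add[symmetric] p(1) q(1) fa_add_closed delta_B_piB delta_add[OF fs] delta_carrier)
  show "delta_B (C \<otimes>\<^bsub>B_alg\<^esub> D) = delta_B C \<otimes>\<^bsub>B_alg\<^esub> D \<oplus>\<^bsub>B_alg\<^esub> C \<otimes>\<^bsub>B_alg\<^esub> delta_B D"
    unfolding p(2) q(2)
    by (simp add: piB_mult[symmetric] piB_add[symmetric] p(1) q(1) fa_mult_closed delta_B_piB
        delta_mult[OF fs] delta_carrier)
next
  fix c :: 'k and C :: "(nat list \<Rightarrow> 'k) set" assume C: "C \<in> carrier B_alg"
  obtain p where p: "p \<in> carrier (free_alg 6)" "C = piB p" using carrier_B_alg[OF C] by blast
  show "delta_B (B_emb c \<otimes>\<^bsub>B_alg\<^esub> C) = B_emb c \<otimes>\<^bsub>B_alg\<^esub> delta_B C"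
    unfolding B_emb_def p(2)
    by (simp add: piB_mult[symmetric] fa_scalar_carrier p(1) delta_carrier fa_mult_closed delta_B_piB
        fa_scalar_mult delta_scale carrier_scale)
qed

abbreviation piA :: "(nat list \<Rightarrow> 'k::field) \<Rightarrow> (nat list \<Rightarrow> 'k) set" where
  "piA p \<equiv> idealA +>\<^bsub>free_alg 7\<^esub> p"

lemma carrier_A_alg: "C \<in> carrier (A_alg :: ((nat list \<Rightarrow> 'k::field) set) ring) \<Longrightarrow> \<exists>p\<in>carrier (free_alg 7). C = piA p"
  unfolding A_alg_def carrier_quot by blast

lemma piA_carrier: "p \<in> carrier (free_alg 7) \<Longrightarrow> piA p \<in> carrier (A_alg :: ((nat list \<Rightarrow> 'k::field) set) ring)"
  unfolding A_alg_def by (rule pi_carrier[OF idealA_ideal])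

lemma piA_add: "p \<in> carrier (free_alg 7) \<Longrightarrow> q \<in> carrier (free_alg 7) \<Longrightarrow>
   piA (\<lambda>w. p w + q w) = piA p \<oplus>\<^bsub>A_alg\<^esub> piA (q :: nat list \<Rightarrow> 'k::field)"
  unfolding A_alg_def by (rule pi_add[OF idealA_ideal])

lemma piA_mult: "p \<in> carrier (free_alg 7) \<Longrightarrow> q \<in> carrier (free_alg 7) \<Longrightarrow>
   piA (fa_mult p q) = piA p \<otimes>\<^bsub>A_alg\<^esub> piA (q :: nat list \<Rightarrow> 'k::field)"
  unfolding A_alg_def by (rule pi_mult[OF idealA_ideal])

lemma piA_one: "piA (mon []) = \<one>\<^bsub>A_alg\<^esub>"
  unfolding A_alg_def by (rule pi_one[OF idealA_ideal])

lemma piA_eq: "p \<in> carrier (free_alg 7) \<Longrightarrow> q \<in> carrier (free_alg 7) \<Longrightarrow>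
   (piA p = piA q) \<longleftrightarrow> (\<lambda>w. p w - q w) \<in> (idealA :: (nat list \<Rightarrow> 'k::field) set)"
  by (rule coset_eq[OF idealA_ideal])

section \<open>The action of the free algebra on coefficient sequences\<close>

text \<open>
  A sequence \<open>g\<close> stands for \<open>\<Sum>\<^sub>n [g n] X\<^sup>n \<in> B[X; \<delta>]\<close>, where \<open>[-]\<close> is the class modulo
  \<open>idealB\<close>; \<open>act 7\<close> is left multiplication by \<open>X\<close>, computed with \<open>X b = b X + \<delta>(b)\<close>.
\<close>

type_synonym 'k ore_seq = "nat \<Rightarrow> nat list \<Rightarrow> 'k"

abbreviation vanishes_above :: "nat \<Rightarrow> 'k::field ore_seq \<Rightarrow> bool" where
  "vanishes_above N h \<equiv> \<forall>n>N. h n = (\<lambda>w. 0)"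

definition ore_poly :: "'k::field ore_seq \<Rightarrow> bool" where
  "ore_poly g \<longleftrightarrow> (\<forall>n. g n \<in> carrier (free_alg 6)) \<and> (\<exists>N. vanishes_above N g)"

definition act :: "nat \<Rightarrow> 'k::field ore_seq \<Rightarrow> 'k ore_seq" where
  "act a g = (if a = 7 then (\<lambda>n w. (if n = 0 then 0 else g (n-1) w) + delta (g n) w)
              else (\<lambda>n. fa_mult (gen a) (g n)))"

definition word_act :: "nat list \<Rightarrow> 'k::field ore_seq \<Rightarrow> 'k ore_seq" where
  "word_act u g = foldr act u g"

definition action :: "(nat list \<Rightarrow> 'k::field) \<Rightarrow> 'k ore_seq \<Rightarrow> 'k ore_seq" where
  "action p g = (\<lambda>n w. lin_ext (\<lambda>u (m,v). word_act u g m v) p (n,w))"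

lemma word_act_Nil[simp]: "word_act [] g = g" by (simp add: word_act_def)

lemma word_act_Cons[simp]: "word_act (a # u) g = act a (word_act u g)" by (simp add: word_act_def)

lemma word_act_append: "word_act (u @ v) g = word_act u (word_act v g)" by (simp add: word_act_def)

lemma act_x7: "act 7 g = (\<lambda>n w. (if n = 0 then 0 else g (n-1) w) + delta (g n) w)"
  by (simp add: act_def)

lemma act_left_mult: "a \<noteq> 7 \<Longrightarrow> act a g = (\<lambda>n. fa_mult (gen a) (g n))"
  by (simp add: act_def)

lemma ore_poly_carrier: "ore_poly g \<Longrightarrow> g n \<in> carrier (free_alg 6)"
  by (simp add: ore_poly_def)

lemma ore_poly_fsupp: "ore_poly g \<Longrightarrow> fsupp (g n)"
  using carrier_fsupp ore_poly_carrier by blast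

lemma ore_poly_vanishes_above: "ore_poly h \<Longrightarrow> \<exists>N. vanishes_above N h"
  unfolding ore_poly_def by auto

lemma ore_poly_common_bound:
  assumes "finite A" and "\<And>u. u \<in> A \<Longrightarrow> ore_poly (h u)"
  shows "\<exists>N. \<forall>u\<in>A. vanishes_above N (h u)"
proof -
  have "\<forall>u\<in>A. \<exists>N. vanishes_above N (h u)" using assms(2) ore_poly_vanishes_above by blast
  then obtain Nf where Nf: "\<forall>u\<in>A. vanishes_above (Nf u) (h u)" by metis
  have "vanishes_above (Max (Nf ` A)) (h u)" if "u \<in> A" for u
  proof (intro allI impI)
    fix n assume "n > Max (Nf ` A)"
    moreover have "Nf u \<le> Max (Nf ` A)" using that assms(1) by simp
    ultimately have "n > Nf u" by linarith
    then show "h u n = (\<lambda>w. 0)" using Nf that by blast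
  qed
  then show ?thesis by blast
qed

lemma ore_poly_sum: "finite A \<Longrightarrow> (\<forall>i\<in>A. ore_poly (h i)) \<Longrightarrow> ore_poly (\<lambda>n w. \<Sum>i\<in>A. c i * h i n w)"
proof (induction A rule: finite_induct)
  case empty then show ?case by (simp add: ore_poly_def carrier_zero)
next
  case (insert a A)
  then obtain N1 where N1: "\<forall>n>N1. h a n = (\<lambda>w. 0)" by (auto simp: ore_poly_def)
  from insert obtain N2 where N2: "\<forall>n>N2. (\<lambda>w. \<Sum>i\<in>A. c i * h i n w) = (\<lambda>w. 0)" by (auto simp: ore_poly_def)
  have "\<forall>n>max N1 N2. (\<lambda>w. \<Sum>i\<in>insert a A. c i * h i n w) = (\<lambda>w. 0)"
  proof (intro allI impI)
    fix n assume "n > max N1 N2"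
    then have "h a n = (\<lambda>w. 0)" "(\<lambda>w. \<Sum>i\<in>A. c i * h i n w) = (\<lambda>w. 0)" using N1 N2 by auto
    then show "(\<lambda>w. \<Sum>i\<in>insert a A. c i * h i n w) = (\<lambda>w. 0)"
      using insert by (simp add: fun_eq_iff)
  qed
  moreover have "\<forall>n. (\<lambda>w. \<Sum>i\<in>insert a A. c i * h i n w) \<in> carrier (free_alg 6)"
    using insert by (intro allI carrier_sum) (auto simp: ore_poly_def)
  ultimately show ?case unfolding ore_poly_def by blast
qed

lemma ore_poly_act: "a \<in> {1..7} \<Longrightarrow> ore_poly g \<Longrightarrow> ore_poly (act a g)"
proof -
  assume a: "a \<in> {1..7}" and g: "ore_poly g"
  then obtain N where N: "\<forall>n>N. g n = (\<lambda>w. 0)" by (auto simp: ore_poly_def)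
  show ?thesis
  proof (cases "a = 7")
    case True
    have c1: "g m \<in> carrier (free_alg 6)" for m using g by (rule ore_poly_carrier)
    have c2: "delta (g m) \<in> carrier (free_alg 6)" for m using c1 by (rule delta_carrier)
    have "act a g n \<in> carrier (free_alg 6)" for n
      unfolding True act_x7
      by (cases "n = 0") (simp_all add: c2 fa_add_closed[OF c1 c2])
    moreover have "\<forall>n>Suc N. act a g n = (\<lambda>w. 0)"
      unfolding True act_x7 using N by (auto simp: delta_zero)
    ultimately show ?thesis by (auto simp: ore_poly_def)
  next
    case False
    then have "a \<in> {1..6}" using a by auto
    then have "act a g n \<in> carrier (free_alg 6)" for n
      unfolding act_left_mult[OF False] using fa_mult_closed[OF gen_carrier ore_poly_carrier[OF g]] by auto
    moreover have "\<forall>n>N. act a g n = (\<lambda>w. 0)"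
      unfolding act_left_mult[OF False] using N by (auto simp: fa_mult_zeroR)
    ultimately show ?thesis by (auto simp: ore_poly_def)
  qed
qed

lemma ore_poly_word_act: "set u \<subseteq> {1..7} \<Longrightarrow> ore_poly g \<Longrightarrow> ore_poly (word_act u g)"
  by (induction u) (auto intro: ore_poly_act)

lemma vanishes_above_act: "vanishes_above N h \<Longrightarrow> vanishes_above (Suc N) (act a h)"
  by (cases "a = 7") (auto simp: act_x7 act_left_mult fa_mult_zeroR delta_zero)

lemma act_linear:
  assumes a: "a \<in> {1..7}" and A: "finite A" and h: "\<forall>i\<in>A. ore_poly (h i)"
  shows "act a (\<lambda>n w. \<Sum>i\<in>A. c i * h i n w) = (\<lambda>n w. \<Sum>i\<in>A. c i * act a (h i) n w)"
proof (cases "a = 7")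
  case True
  have "delta (\<lambda>w. \<Sum>i\<in>A. c i * h i n w) = (\<lambda>w. \<Sum>i\<in>A. c i * delta (h i n) w)" for n
    unfolding delta_def using A h by (intro der_ext_sum) (auto intro: ore_poly_fsupp)
  then show ?thesis unfolding True act_x7
    by (auto simp: fun_eq_iff ring_distribs sum.distrib)
next
  case False
  then show ?thesis by (simp add: act_left_mult fa_mult_sumR)
qed

lemma word_act_linear:
  assumes u: "set u \<subseteq> {1..7}" and A: "finite A" and h: "\<forall>i\<in>A. ore_poly (h i)"
  shows "word_act u (\<lambda>n w. \<Sum>i\<in>A. c i * h i n w) = (\<lambda>n w. \<Sum>i\<in>A. c i * word_act u (h i) n w)"
  using u
proof (induction u)
  case Nil then show ?case by simp
next
  case (Cons a u)
  then have "word_act (a # u) (\<lambda>n w. \<Sum>i\<in>A. c i * h i n w) = act a (\<lambda>n w. \<Sum>i\<in>A. c i * word_act u (h i) n w)"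
    by simp
  also have "\<dots> = (\<lambda>n w. \<Sum>i\<in>A. c i * act a (word_act u (h i)) n w)"
  proof (rule act_linear)
    have su: "set u \<subseteq> {1..7}" using Cons.prems by simp
    show "\<forall>i\<in>A. ore_poly (word_act u (h i))" using su h ore_poly_word_act by blast
  qed (use Cons.prems A in auto)
  finally show ?case by simp
qed

lemma action_eq_sum: "action p g = (\<lambda>n w. \<Sum>u\<in>{u. p u \<noteq> 0}. p u * word_act u g n w)"
  unfolding action_def lin_ext_def by simp

lemma action_add: "fsupp p \<Longrightarrow> fsupp q \<Longrightarrow> action (\<lambda>w. p w + q w) g = (\<lambda>n w. action p g n w + action q g n w)"
  unfolding action_def by (simp add: lin_ext_add)

lemma action_scale: "action (\<lambda>w. c * p w) g = (\<lambda>n w. c * action p g n w)"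
  unfolding action_def by (simp add: lin_ext_scale)

lemma action_diff: "fsupp p \<Longrightarrow> fsupp q \<Longrightarrow> action (\<lambda>w. p w - q w) g = (\<lambda>n w. action p g n w - action q g n w)"
  using action_add[of p "\<lambda>w. -1 * q w" g] action_scale[of "-1" q g] fsupp_scale[of q "-1"] by simp

lemma action_zero: "action (\<lambda>w. 0) g = (\<lambda>n w. 0)"
  unfolding action_def by (simp add: lin_ext_zero)

lemma action_sum_scaled: "finite A \<Longrightarrow> (\<forall>i\<in>A. fsupp (f i)) \<Longrightarrow>
   action (\<lambda>w. \<Sum>i\<in>A. c i * f i w) g = (\<lambda>n w. \<Sum>i\<in>A. c i * action (f i) g n w)"
  unfolding action_def by (simp add: lin_ext_sum)

lemma action_sum: "finite A \<Longrightarrow> (\<forall>i\<in>A. fsupp (f i)) \<Longrightarrow>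
   action (\<lambda>w. \<Sum>i\<in>A. f i w) g = (\<lambda>n w. \<Sum>i\<in>A. action (f i) g n w)"
  using action_sum_scaled[of A f "\<lambda>_. 1" g] by simp

lemma action_mon: "action (mon u) g = word_act u g"
  unfolding action_def by (simp add: lin_ext_mon)

lemma action_gen: "action (gen a) g = act a g"
  by (simp add: gen_mon action_mon)

lemma ore_poly_action: "p \<in> carrier (free_alg 7) \<Longrightarrow> ore_poly g \<Longrightarrow> ore_poly (action p g)"
  unfolding action_eq_sum
proof (rule ore_poly_sum)
  assume p: "p \<in> carrier (free_alg 7)" and g: "ore_poly g"
  show "finite {u. p u \<noteq> 0}" using p carrier_fsupp by blast
  show "\<forall>i\<in>{u. p u \<noteq> 0}. ore_poly (word_act i g)"
    using carrier_words[OF p] ore_poly_word_act g by blast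
qed

lemma action_mult:
  assumes p: "p \<in> carrier (free_alg 7)" and q: "q \<in> carrier (free_alg 7)" and g: "ore_poly g"
  shows "action (fa_mult p q) g = action p (action q (g :: 'k::field ore_seq))"
proof (rule ext, rule ext)
  fix n w
  let ?Sp = "{u. p u \<noteq> 0}" and ?Sq = "{v. q v \<noteq> 0}"
  have fp: "finite ?Sp" and fq: "finite ?Sq" using p q by (auto simp: carrier_free_alg)
  have "action (fa_mult p q) g n w = (\<Sum>u\<in>?Sp. \<Sum>v\<in>?Sq. p u * q v * word_act (u @ v) g n w)"
    unfolding action_def using lin_ext_mult[OF fp fq, where F = "\<lambda>u (m,v). word_act u g m v" and x = "(n,w)"] by simp
  also have "\<dots> = (\<Sum>u\<in>?Sp. p u * (\<Sum>v\<in>?Sq. q v * word_act u (word_act v g) n w))"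
    by (simp add: word_act_append sum_distrib_left mult.assoc)
  also have "\<dots> = (\<Sum>u\<in>?Sp. p u * word_act u (action q g) n w)"
  proof (rule sum.cong[OF refl])
    fix u assume u: "u \<in> ?Sp"
    have "word_act u (action q g) = word_act u (\<lambda>n w. \<Sum>v\<in>?Sq. q v * word_act v g n w)"
      by (simp add: action_eq_sum)
    also have "\<dots> = (\<lambda>n w. \<Sum>v\<in>?Sq. q v * word_act u (word_act v g) n w)"
    proof (rule word_act_linear)
      show "set u \<subseteq> {1..7}" using u carrier_words[OF p] by blast
      show "\<forall>i\<in>?Sq. ore_poly (word_act i g)" using carrier_words[OF q] ore_poly_word_act g by blast
    qed (rule fq)
    finally show "p u * (\<Sum>v\<in>?Sq. q v * word_act u (word_act v g) n w) = p u * word_act u (action q g) n w" by simp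
  qed
  also have "\<dots> = action p (action q g) n w" by (simp add: action_eq_sum)
  finally show "action (fa_mult p q) g n w = action p (action q g) n w" .
qed

lemma word_act_left_mult: "set u \<subseteq> {1..6} \<Longrightarrow> word_act u g = (\<lambda>n. fa_mult (mon u) (g n))"
proof (induction u)
  case Nil then show ?case by (simp add: mon_Nil fa_mult_oneL)
next
  case (Cons a u)
  then have "a \<noteq> 7" by auto
  with Cons show ?case
    by (simp add: act_left_mult fa_mult_assoc[symmetric] gen_mon mon_mult)
qed

lemma action_left_mult: "p \<in> carrier (free_alg 6) \<Longrightarrow> action p g = (\<lambda>n. fa_mult p (g n))"
proof -
  assume p: "p \<in> carrier (free_alg 6)"
  have "action p g = (\<lambda>n w. \<Sum>u\<in>{u. p u \<noteq> 0}. p u * fa_mult (mon u) (g n) w)"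
    unfolding action_eq_sum using p by (intro ext sum.cong refl) (simp add: word_act_left_mult[OF carrier_words[OF p]])
  also have "\<dots> = (\<lambda>n. fa_mult (\<lambda>x. \<Sum>u\<in>{u. p u \<noteq> 0}. p u * mon u x) (g n))"
    by (simp add: fa_mult_sumL)
  also have "\<dots> = (\<lambda>n. fa_mult p (g n))"
    using fsupp_eq_sum_mon[OF carrier_fsupp[OF p], symmetric] by (simp only:)
  finally show ?thesis .
qed

lemma action_ore_rel:
  assumes a: "a \<in> {1..6}" and g: "ore_poly (g :: 'k::field ore_seq)"
  shows "action (ore_rel a) g = (\<lambda>n w. 0)"
proof -
  have g7: "gen 7 \<in> carrier (free_alg 7 :: (nat list \<Rightarrow> 'k) ring)" by (rule gen_carrier) simp
  have ga: "gen a \<in> carrier (free_alg 7 :: (nat list \<Rightarrow> 'k) ring)" using a by (intro gen_carrier) simp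
  have dg: "delta_gen a \<in> carrier (free_alg 6 :: (nat list \<Rightarrow> 'k) ring)" using a by (rule delta_gen_carrier)
  have fs: "fsupp (fa_mult (gen 7) (gen a) :: nat list \<Rightarrow> 'k)" "fsupp (fa_mult (gen a) (gen 7) :: nat list \<Rightarrow> 'k)"
    "fsupp (comm (gen 7) (gen a) :: nat list \<Rightarrow> 'k)" "fsupp (delta_gen a :: nat list \<Rightarrow> 'k)"
    using carrier_fsupp[OF dg] by (simp_all add: fsupp_mult fsupp_comm fsupp_gen)
  have "action (ore_rel a) g = (\<lambda>n w. act 7 (act a g) n w - act a (act 7 g) n w - fa_mult (delta_gen a) (g n) w)"
    unfolding ore_rel_def action_diff[OF fs(3,4)] unfolding comm_def action_diff[OF fs(1,2)]
    by (simp add: action_mult[OF g7 ga g] action_mult[OF ga g7 g] action_gen action_left_mult[OF dg])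
  moreover have leibniz: "delta (fa_mult (gen a) (g n))
      = (\<lambda>w. fa_mult (delta_gen a) (g n) w + fa_mult (gen a) (delta (g n)) w)" for n
    using delta_mult[OF fsupp_gen ore_poly_fsupp[OF g]] by (simp add: delta_gen_eq)
  moreover have "a \<noteq> 7" using a by auto
  ultimately show ?thesis
    by (intro ext) (simp add: act_x7 act_left_mult leibniz fa_mult_addR fa_mult_zeroR)
qed

lemma action_relA:
  assumes j: "j \<in> {1..6}" and g: "ore_poly (g :: 'k::field ore_seq)"
  shows "action (relA j) g = (\<lambda>n w. 0)"
proof -
  have neg: "action (\<lambda>w. - ore_rel a w) g = (\<lambda>n w. 0)" if "a \<in> {1..6}" for a
    using action_scale[of "-1" "ore_rel a" g] action_ore_rel[OF that g] by simp
  have "j = 1 \<or> j = 2 \<or> j = 3 \<or> j = 4 \<or> j = 5 \<or> j = 6" using j by auto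
  then show ?thesis
    by (elim disjE; simp only: relA_ore_rel; simp add: action_ore_rel[OF _ g] neg)
qed

lemma act_idealB:
  assumes a: "a \<in> {1..7}" and g: "ore_poly g" and gi: "\<forall>n. g n \<in> idealB"
  shows "act a g n \<in> (idealB :: (nat list \<Rightarrow> 'k::field) set)"
proof (cases "a = 7")
  case True
  show ?thesis
  proof (cases "n = 0")
    case True
    then show ?thesis unfolding \<open>a = 7\<close> act_x7 using delta_idealB[OF gi[rule_format, of n]] by simp
  next
    case False
    then show ?thesis unfolding \<open>a = 7\<close> act_x7
      using fa_ideal_add[OF idealB_ideal gi[rule_format, of "n-1"] delta_idealB[OF gi[rule_format, of n]]] by simp
  qed
next
  case False
  then have "a \<in> {1..6}" using a by auto
  then show ?thesis unfolding act_left_mult[OF False]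
    using fa_ideal_multL[OF idealB_ideal gi[rule_format, of n] gen_carrier] by simp
qed

lemma word_act_idealB:
  assumes u: "set u \<subseteq> {1..7}" and g: "ore_poly g" and gi: "\<forall>n. g n \<in> idealB"
  shows "word_act u g n \<in> (idealB :: (nat list \<Rightarrow> 'k::field) set)"
  using u
proof (induction u arbitrary: n)
  case Nil then show ?case using gi by simp
next
  case (Cons a u)
  have su: "set u \<subseteq> {1..7}" using Cons.prems by simp
  show ?case using act_idealB[of a "word_act u g" n] Cons su ore_poly_word_act[OF su g] by simp
qed

lemma action_idealB:
  assumes p: "p \<in> carrier (free_alg 7)" and g: "ore_poly g" and gi: "\<forall>n. g n \<in> idealB"
  shows "action p g n \<in> (idealB :: (nat list \<Rightarrow> 'k::field) set)"
  unfolding action_eq_sum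
  by (rule fa_ideal_sum[OF idealB_ideal]) (use p carrier_fsupp carrier_words word_act_idealB g gi in blast)+

definition action_kernel :: "(nat list \<Rightarrow> 'k::field) set" where
  "action_kernel = {p \<in> carrier (free_alg 7). \<forall>g. ore_poly g \<longrightarrow> (\<forall>n. action p g n \<in> idealB)}"

lemma action_kernel_ideal: "ideal (action_kernel :: (nat list \<Rightarrow> 'k::field) set) (free_alg 7)"
proof (rule free_alg_idealI)
  note IB = idealB_ideal[where 'k='k]
  show "action_kernel \<subseteq> carrier (free_alg 7)" unfolding action_kernel_def by auto
  show "(\<lambda>w. 0) \<in> (action_kernel :: (nat list \<Rightarrow> 'k::field) set)"
    unfolding action_kernel_def by (simp add: carrier_zero action_zero fa_ideal_zero[OF IB])
  show "(\<lambda>w. p w + q w) \<in> action_kernel" if "p \<in> action_kernel" "q \<in> action_kernel" for p q :: "nat list \<Rightarrow> 'k"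
    using that unfolding action_kernel_def
    by (auto simp: action_add carrier_fsupp intro!: fa_add_closed fa_ideal_add[OF IB])
  show "(\<lambda>w. - p w) \<in> action_kernel" if "p \<in> action_kernel" for p :: "nat list \<Rightarrow> 'k"
    using that unfolding action_kernel_def
    using action_scale[of "-1" p] carrier_scale[of p 7 "-1"] fa_ideal_neg[OF IB] by auto
  show "fa_mult x p \<in> action_kernel" if "p \<in> action_kernel" "x \<in> carrier (free_alg 7)" for p x :: "nat list \<Rightarrow> 'k"
  proof -
    have p: "p \<in> carrier (free_alg 7)" using that unfolding action_kernel_def by auto
    have "action (fa_mult x p) g n \<in> idealB" if g: "ore_poly g" for g n
    proof -
      have "action (fa_mult x p) g = action x (action p g)" by (rule action_mult[OF \<open>x \<in> _\<close> p g])
      moreover have "action x (action p g) n \<in> idealB"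
        using action_idealB[OF \<open>x \<in> _\<close> ore_poly_action[OF p g]] \<open>p \<in> action_kernel\<close> g unfolding action_kernel_def by auto
      ultimately show ?thesis by simp
    qed
    then show ?thesis unfolding action_kernel_def using fa_mult_closed[OF that(2) p] by auto
  qed
  show "fa_mult p x \<in> action_kernel" if "p \<in> action_kernel" "x \<in> carrier (free_alg 7)" for p x :: "nat list \<Rightarrow> 'k"
  proof -
    have p: "p \<in> carrier (free_alg 7)" using that unfolding action_kernel_def by auto
    have "action (fa_mult p x) g n \<in> idealB" if g: "ore_poly g" for g n
    proof -
      have "action (fa_mult p x) g = action p (action x g)" by (rule action_mult[OF p \<open>x \<in> _\<close> g])
      moreover have "action p (action x g) n \<in> idealB"
        using \<open>p \<in> action_kernel\<close> ore_poly_action[OF \<open>x \<in> _\<close> g] unfolding action_kernel_def by auto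
      ultimately show ?thesis by simp
    qed
    then show ?thesis unfolding action_kernel_def using fa_mult_closed[OF p that(2)] by auto
  qed
qed

lemma idealA_action_kernel: "idealA \<subseteq> (action_kernel :: (nat list \<Rightarrow> 'k::field) set)"
  unfolding idealA_def
proof (rule ring.genideal_minimal[OF ring_free_alg action_kernel_ideal])
  show "relA ` {1..7} \<subseteq> (action_kernel :: (nat list \<Rightarrow> 'k::field) set)"
  proof
    fix r :: "nat list \<Rightarrow> 'k" assume "r \<in> relA ` {1..7}"
    then obtain j where j: "j \<in> {1..7}" and r: "r = relA j" by auto
    have rc: "r \<in> carrier (free_alg 7)" using relA_carrier j r by blast
    have "action r g n \<in> (idealB :: (nat list \<Rightarrow> 'k::field) set)" if g: "ore_poly g" for g :: "'k ore_seq" and n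
    proof (cases "j = 7")
      case True
      then have "action r g = (\<lambda>n. fa_mult relB (g n))" using r relA_7[where 'a='k] action_left_mult[OF relB_carrier] by simp
      then show ?thesis using fa_ideal_multR[OF idealB_ideal relB_idealB ore_poly_carrier[OF g]] by simp
    next
      case False
      then have "j \<in> {1..6}" using j by auto
      then show ?thesis using action_relA[OF _ g] r fa_ideal_zero[OF idealB_ideal] by simp
    qed
    then show "r \<in> action_kernel" unfolding action_kernel_def using rc by auto
  qed
qed

section \<open>The action computes the product of the Ore extension\<close>

definition ore_one :: "'k::field ore_seq" where
  "ore_one = (\<lambda>n. if n = 0 then mon [] else (\<lambda>w. 0))"

lemma ore_poly_ore_one: "ore_poly ore_one"
  unfolding ore_poly_def ore_one_def by (auto intro: mon_carrier carrier_zero)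

lemma action_ore_one_carrier: "p \<in> carrier (free_alg 7) \<Longrightarrow> action p ore_one n \<in> carrier (free_alg 6 :: (nat list \<Rightarrow> 'k::field) ring)"
  by (rule ore_poly_carrier[OF ore_poly_action[OF _ ore_poly_ore_one]])

lemma action_ore_one_bound:
  fixes p :: "nat list \<Rightarrow> 'k::field"
  assumes p: "p \<in> carrier (free_alg 7)"
  obtains N where "\<And>u. p u \<noteq> 0 \<Longrightarrow> vanishes_above N (word_act u (ore_one :: 'k ore_seq))"
    and "vanishes_above N (action p (ore_one :: 'k ore_seq))"
proof -
  have "finite {u. p u \<noteq> 0}" using p carrier_fsupp by blast
  then obtain N where N: "\<forall>u\<in>{u. p u \<noteq> 0}. vanishes_above N (word_act u (ore_one :: 'k ore_seq))"
    using ore_poly_common_bound[of "{u. p u \<noteq> 0}" "\<lambda>u. word_act u ore_one"]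
      carrier_words[OF p] ore_poly_word_act ore_poly_ore_one by blast
  moreover have "vanishes_above N (action p (ore_one :: 'k ore_seq))"
  proof (intro allI impI)
    fix n assume "n > N"
    then have "word_act u (ore_one :: 'k ore_seq) n = (\<lambda>w. 0)" if "p u \<noteq> 0" for u
      using N that \<open>n > N\<close> by blast
    then show "action p (ore_one :: 'k ore_seq) n = (\<lambda>w. 0)" by (simp add: action_eq_sum)
  qed
  ultimately show ?thesis using that by blast
qed

definition X_act_pow :: "nat \<Rightarrow> 'k::field ore_seq \<Rightarrow> 'k ore_seq" where
  "X_act_pow i g = (act 7 ^^ i) g"

lemma ore_poly_X_act_pow: "ore_poly g \<Longrightarrow> ore_poly (X_act_pow i g)"
  unfolding X_act_pow_def by (induction i) (auto intro: ore_poly_act)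

lemma X_act_pow_Suc: "X_act_pow (Suc i) g = act 7 (X_act_pow i g)"
  unfolding X_act_pow_def by simp

text \<open>Pascal's rule in the shape of \<open>X\<^sup>i\<^sup>+\<^sup>1 g = X \<cdot> X\<^sup>i g\<close>: a shift plus a derivative.\<close>

lemma binomial_shift_sum:
  fixes D :: "nat \<Rightarrow> nat \<Rightarrow> 'a::comm_semiring_1"
  shows "(\<Sum>l\<le>Suc i. (if l \<le> m then of_nat (Suc i choose l) else 0) * D (Suc i - l) (m - l))
    = (if m = 0 then 0 else (\<Sum>l\<le>i. (if l \<le> m - 1 then of_nat (i choose l) else 0) * D (i - l) (m - 1 - l)))
      + (\<Sum>l\<le>i. (if l \<le> m then of_nat (i choose l) else 0) * D (Suc i - l) (m - l))"
proof -
  let ?c = "\<lambda>k l. if Suc l \<le> m then of_nat k else (0::'a)"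
  have shifted: "(if m = 0 then 0 else (\<Sum>l\<le>i. (if l \<le> m - 1 then of_nat (i choose l) else 0) * D (i - l) (m - 1 - l)))
      = (\<Sum>l\<le>i. ?c (i choose l) l * D (i - l) (m - Suc l))"
    by (cases m) simp_all
  have "(\<Sum>l\<le>i. (if l \<le> m then of_nat (i choose l) else 0) * D (Suc i - l) (m - l))
      = (\<Sum>l\<le>Suc i. (if l \<le> m then of_nat (i choose l) else 0) * D (Suc i - l) (m - l))"
    by (simp add: binomial_eq_0)
  also have "\<dots> = D (Suc i) m + (\<Sum>l\<le>i. ?c (i choose Suc l) l * D (i - l) (m - Suc l))"
    by (subst sum.atMost_Suc_shift) simp
  finally have unshifted: "(\<Sum>l\<le>i. (if l \<le> m then of_nat (i choose l) else 0) * D (Suc i - l) (m - l))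
      = D (Suc i) m + (\<Sum>l\<le>i. ?c (i choose Suc l) l * D (i - l) (m - Suc l))" .
  have pascal: "?c (Suc i choose Suc l) l = ?c (i choose l) l + ?c (i choose Suc l) l" for l
    by simp
  have "(\<Sum>l\<le>Suc i. (if l \<le> m then of_nat (Suc i choose l) else 0) * D (Suc i - l) (m - l))
      = D (Suc i) m + (\<Sum>l\<le>i. ?c (i choose l) l * D (i - l) (m - Suc l))
        + (\<Sum>l\<le>i. ?c (i choose Suc l) l * D (i - l) (m - Suc l))"
    by (subst sum.atMost_Suc_shift) (simp only: pascal ring_distribs sum.distrib diff_Suc_Suc
        binomial_n_0 of_nat_1 mult_1 add.assoc diff_zero le0 if_True)
  then show ?thesis unfolding shifted unshifted by (simp add: algebra_simps)
qed

lemma X_act_pow_eq: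
  assumes g: "ore_poly (g :: 'k::field ore_seq)"
  shows "X_act_pow i g m = (\<lambda>w. \<Sum>l\<le>i. (if l \<le> m then of_nat (i choose l) else 0) * (delta ^^ (i - l)) (g (m - l)) w)"
proof (induction i arbitrary: m)
  case 0 then show ?case by (simp add: X_act_pow_def)
next
  case (Suc i)
  have fs: "fsupp ((delta ^^ k) (g j))" for k j
    by (rule carrier_fsupp[OF delta_pow_carrier[OF ore_poly_carrier[OF g]]])
  have "delta (X_act_pow i g m)
      = (\<lambda>w. \<Sum>l\<le>i. (if l \<le> m then of_nat (i choose l) else 0) * delta ((delta ^^ (i - l)) (g (m - l))) w)"
    unfolding Suc.IH delta_def by (rule der_ext_sum) (auto simp: fs[unfolded delta_def])
  also have "\<dots> = (\<lambda>w. \<Sum>l\<le>i. (if l \<le> m then of_nat (i choose l) else 0) * (delta ^^ (Suc i - l)) (g (m - l)) w)"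
    by (intro ext sum.cong refl) (simp add: Suc_diff_le)
  finally have dX: "delta (X_act_pow i g m) = \<dots>" .
  show ?case
  proof (rule ext)
    fix w
    have "X_act_pow (Suc i) g m w = (if m = 0 then 0 else X_act_pow i g (m - 1) w) + delta (X_act_pow i g m) w"
      by (simp add: X_act_pow_Suc act_x7)
    then show "X_act_pow (Suc i) g m w
        = (\<Sum>l\<le>Suc i. (if l \<le> m then of_nat (Suc i choose l) else 0) * (delta ^^ (Suc i - l)) (g (m - l)) w)"
      unfolding dX binomial_shift_sum[where D = "\<lambda>k j. (delta ^^ k) (g j) w"] by (simp only: Suc.IH)
  qed
qed

text \<open>\<open>(\<Sum>\<^sub>i\<^sub>\<le>\<^sub>N h\<^sub>i X\<^sup>i) \<cdot> g\<close>, with \<open>X\<^sup>i\<close> acting on \<open>g\<close> through \<open>X_act_pow\<close>.\<close>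

definition ore_mult_seq :: "nat \<Rightarrow> 'k::field ore_seq \<Rightarrow> 'k ore_seq \<Rightarrow> 'k ore_seq" where
  "ore_mult_seq N h g = (\<lambda>m w. \<Sum>i\<le>N. fa_mult (h i) (X_act_pow i g m) w)"

lemma ore_mult_seq_mono: "vanishes_above N h \<Longrightarrow> N \<le> N' \<Longrightarrow> ore_mult_seq N' h g = ore_mult_seq N h g"
  unfolding ore_mult_seq_def
proof (intro ext)
  fix m w assume b: "vanishes_above N h" and NN: "N \<le> N'"
  show "(\<Sum>i\<le>N'. fa_mult (h i) (X_act_pow i g m) w) = (\<Sum>i\<le>N. fa_mult (h i) (X_act_pow i g m) w)"
    by (rule sum.mono_neutral_right) (use b NN in \<open>auto simp: fa_mult_zeroL\<close>)
qed

lemma ore_mult_seq_indep: "vanishes_above N1 h \<Longrightarrow> vanishes_above N2 h \<Longrightarrow> ore_mult_seq N1 h g = ore_mult_seq N2 h g"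
  using ore_mult_seq_mono[of N1 h "max N1 N2" g] ore_mult_seq_mono[of N2 h "max N1 N2" g] by simp

lemma ore_mult_seq_linear: "finite A \<Longrightarrow> ore_mult_seq N (\<lambda>n w. \<Sum>j\<in>A. c j * h j n w) g = (\<lambda>m w. \<Sum>j\<in>A. c j * ore_mult_seq N (h j) g m w)"
  unfolding ore_mult_seq_def
  by (intro ext) (simp add: fa_mult_sumL sum_distrib_left, rule sum.swap)

lemma ore_mult_seq_ore_one: "ore_poly g \<Longrightarrow> ore_mult_seq N ore_one g = (g :: 'k::field ore_seq)"
  unfolding ore_mult_seq_def ore_one_def
proof (intro ext)
  fix m w
  have "(\<Sum>i\<le>N. fa_mult (if i = 0 then mon [] else (\<lambda>w. 0)) (X_act_pow i g m) w)
      = (\<Sum>i\<le>N. if i = 0 then fa_mult (mon []) (X_act_pow i g m) w else 0)"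
    by (rule sum.cong) (auto simp: fa_mult_zeroL)
  also have "\<dots> = g m w" by (simp add: X_act_pow_def mon_Nil fa_mult_oneL)
  finally show "(\<Sum>i\<le>N. fa_mult (if i = 0 then mon [] else (\<lambda>w. 0)) (X_act_pow i g m) w) = g m w" .
qed

lemma ore_mult_seq_act_x7:
  assumes b: "vanishes_above N h"
  shows "ore_mult_seq (Suc N) (act 7 h) g m w
    = (\<Sum>i\<le>N. fa_mult (h i) (X_act_pow (Suc i) g m) w) + (\<Sum>i\<le>N. fa_mult (delta (h i)) (X_act_pow i g m) w)"
proof -
  let ?X = "\<lambda>i. X_act_pow i g m"
  have "ore_mult_seq (Suc N) (act 7 h) g m w
      = fa_mult (delta (h 0)) (?X 0) w + (\<Sum>i\<le>N. fa_mult (h i) (?X (Suc i)) w + fa_mult (delta (h (Suc i))) (?X (Suc i)) w)"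
    unfolding ore_mult_seq_def sum.atMost_Suc_shift by (simp add: act_x7 fa_mult_addL)
  also have "\<dots> = (\<Sum>i\<le>N. fa_mult (h i) (?X (Suc i)) w) + (\<Sum>i\<le>Suc N. fa_mult (delta (h i)) (?X i) w)"
    by (simp only: sum.atMost_Suc_shift sum.distrib) (simp add: algebra_simps)
  also have "(\<Sum>i\<le>Suc N. fa_mult (delta (h i)) (?X i) w) = (\<Sum>i\<le>N. fa_mult (delta (h i)) (?X i) w)"
    using b by (simp add: delta_zero fa_mult_zeroL)
  finally show ?thesis .
qed

lemma act_x7_ore_mult_seq:
  assumes h: "ore_poly h" and b: "vanishes_above N h" and g: "ore_poly (g :: 'k::field ore_seq)"
  shows "act 7 (ore_mult_seq N h g) = ore_mult_seq (Suc N) (act 7 h) g"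
proof (intro ext)
  fix m w
  let ?X = "\<lambda>i m. X_act_pow i g m"
  have fsX: "fsupp (?X i m)" for i m using ore_poly_fsupp[OF ore_poly_X_act_pow[OF g]] .
  have fsh: "fsupp (h i)" for i using ore_poly_fsupp[OF h] .
  have "delta (ore_mult_seq N h g m) = (\<lambda>w. \<Sum>i\<le>N. delta (fa_mult (h i) (?X i m)) w)"
    unfolding ore_mult_seq_def by (rule delta_sum) (auto simp: fsupp_mult fsX fsh)
  then have "act 7 (ore_mult_seq N h g) m w
      = (if m = 0 then 0 else (\<Sum>i\<le>N. fa_mult (h i) (?X i (m-1)) w))
        + (\<Sum>i\<le>N. fa_mult (delta (h i)) (?X i m) w) + (\<Sum>i\<le>N. fa_mult (h i) (delta (?X i m)) w)"
    unfolding act_x7 by (simp add: ore_mult_seq_def sum.distrib delta_mult fsX fsh)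
  moreover have "(\<Sum>i\<le>N. fa_mult (h i) (?X (Suc i) m) w)
      = (if m = 0 then 0 else (\<Sum>i\<le>N. fa_mult (h i) (?X i (m-1)) w)) + (\<Sum>i\<le>N. fa_mult (h i) (delta (?X i m)) w)"
    by (simp add: X_act_pow_Suc act_x7 fa_mult_addR fa_mult_zeroR sum.distrib)
  ultimately show "act 7 (ore_mult_seq N h g) m w = ore_mult_seq (Suc N) (act 7 h) g m w"
    by (simp add: ore_mult_seq_act_x7[OF b] algebra_simps)
qed

lemma act_left_mult_ore_mult_seq:
  assumes a: "a \<noteq> 7" and b: "vanishes_above N h"
  shows "act a (ore_mult_seq N h g) = ore_mult_seq (Suc N) (act a h) (g :: 'k::field ore_seq)"
proof -
  have "act a (ore_mult_seq N h g) = ore_mult_seq N (act a h) g"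
    unfolding act_left_mult[OF a] ore_mult_seq_def
    by (simp add: fa_mult_sumR' fa_mult_assoc)
  also have "\<dots> = ore_mult_seq (Suc N) (act a h) g"
    using ore_mult_seq_mono[of N "act a h" "Suc N" g] b a by (simp add: act_left_mult fa_mult_zeroR)
  finally show ?thesis .
qed

lemma act_ore_mult_seq:
  assumes h: "ore_poly h" and b: "vanishes_above N h" and g: "ore_poly (g :: 'k::field ore_seq)"
  shows "act a (ore_mult_seq N h g) = ore_mult_seq (Suc N) (act a h) g"
  using act_x7_ore_mult_seq[OF h b g] act_left_mult_ore_mult_seq[OF _ b] by (cases "a = 7") auto

lemma word_act_eq_ore_mult_seq:
  assumes u: "set u \<subseteq> {1..7}" and g: "ore_poly (g :: 'k::field ore_seq)"
  shows "vanishes_above N (word_act u (ore_one::'k ore_seq)) \<Longrightarrow> word_act u g = ore_mult_seq N (word_act u ore_one) g"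
  using u
proof (induction u arbitrary: N)
  case Nil then show ?case using ore_mult_seq_ore_one[OF g, of N] by (simp only: word_act_Nil)
next
  case (Cons a u)
  have su: "set u \<subseteq> {1..7}" using Cons.prems by simp
  have gh: "ore_poly (word_act u (ore_one::'k ore_seq))" by (rule ore_poly_word_act[OF su ore_poly_ore_one])
  from ore_poly_vanishes_above[OF gh] obtain N0 where N0: "vanishes_above N0 (word_act u (ore_one::'k ore_seq))" by blast
  have "word_act (a # u) g = act a (ore_mult_seq N0 (word_act u ore_one) g)"
    by (simp only: word_act_Cons Cons.IH[OF N0 su])
  also have "\<dots> = ore_mult_seq (Suc N0) (act a (word_act u ore_one)) g" by (rule act_ore_mult_seq[OF gh N0 g])
  also have "\<dots> = ore_mult_seq N (act a (word_act u ore_one)) g"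
    by (rule ore_mult_seq_indep[OF vanishes_above_act[OF N0] Cons.prems(1)[unfolded word_act_Cons]])
  finally show ?case by simp
qed

lemma action_eq_ore_mult_seq:
  assumes p: "p \<in> carrier (free_alg 7)" and g: "ore_poly (g :: 'k::field ore_seq)"
  shows "\<exists>N. vanishes_above N (action p ore_one) \<and> action p g = ore_mult_seq N (action p ore_one) g"
proof -
  let ?S = "{u. p u \<noteq> 0}"
  obtain N where bw: "\<And>u. p u \<noteq> 0 \<Longrightarrow> vanishes_above N (word_act u (ore_one :: 'k ore_seq))"
    and b: "vanishes_above N (action p (ore_one :: 'k ore_seq))"
    using action_ore_one_bound[OF p] by blast
  have "action p g = (\<lambda>n w. \<Sum>u\<in>?S. p u * ore_mult_seq N (word_act u ore_one) g n w)"
    unfolding action_eq_sum using word_act_eq_ore_mult_seq[OF carrier_words[OF p] g bw] by simp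
  also have "\<dots> = ore_mult_seq N (action p ore_one) g"
    unfolding action_eq_sum[of p] by (rule ore_mult_seq_linear[symmetric]) (rule carrier_fsupp[OF p])
  finally show ?thesis using b by blast
qed

lemma sum_if_add_eq: "(\<Sum>j\<le>(M::nat). if l + j = n then X j else 0) = (if l \<le> n \<and> n - l \<le> M then X (n - l) else (0::'a::comm_monoid_add))"
proof -
  have "(\<Sum>j\<le>M. if l + j = n then X j else 0) = (\<Sum>j\<le>M. if j = n - l \<and> l \<le> n then X j else 0)"
    by (rule sum.cong) auto
  also have "\<dots> = (if l \<le> n \<and> n - l \<le> M then X (n - l) else 0)"
    by (cases "l \<le> n") (simp_all add: sum.delta')
  finally show ?thesis .
qed

lemma ore_mult_seq_coeff:
  assumes h: "ore_poly h" and g: "ore_poly (g :: 'k::field ore_seq)" and bg: "vanishes_above M g"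
  shows "(\<Sum>j\<le>M. \<Sum>l\<le>i. (if l + j = n then fa_mult (h i) (\<lambda>w. of_nat (i choose l) * (delta ^^ (i - l)) (g j) w) w else 0))
     = fa_mult (h i) (X_act_pow i g n) w"
proof -
  have "(\<Sum>j\<le>M. \<Sum>l\<le>i. (if l + j = n then fa_mult (h i) (\<lambda>w. of_nat (i choose l) * (delta ^^ (i - l)) (g j) w) w else 0))
      = (\<Sum>l\<le>i. \<Sum>j\<le>M. (if l + j = n then of_nat (i choose l) * fa_mult (h i) ((delta ^^ (i - l)) (g j)) w else 0))"
  proof -
    have sc: "fa_mult (h i) (\<lambda>w. of_nat C * F w) w = of_nat C * fa_mult (h i) F w" for C and F :: "nat list \<Rightarrow> 'k"
      using fa_mult_scaleR[of "h i" "of_nat C" F] by (simp add: fun_eq_iff)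
    show ?thesis by (subst sum.swap) (simp only: sc)
  qed
  also have "\<dots> = (\<Sum>l\<le>i. if l \<le> n \<and> n - l \<le> M then of_nat (i choose l) * fa_mult (h i) ((delta ^^ (i - l)) (g (n - l))) w else 0)"
    by (simp only: sum_if_add_eq)
  also have "\<dots> = (\<Sum>l\<le>i. (if l \<le> n then of_nat (i choose l) else 0) * fa_mult (h i) ((delta ^^ (i - l)) (g (n - l))) w)"
  proof (rule sum.cong[OF refl])
    fix l
    show "(if l \<le> n \<and> n - l \<le> M then of_nat (i choose l) * fa_mult (h i) ((delta ^^ (i - l)) (g (n - l))) w else 0)
      = (if l \<le> n then of_nat (i choose l) else 0) * fa_mult (h i) ((delta ^^ (i - l)) (g (n - l))) w"
      using bg by (auto simp: delta_pow_zero fa_mult_zeroR not_le)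
  qed
  also have "\<dots> = fa_mult (h i) (X_act_pow i g n) w"
    unfolding X_act_pow_eq[OF g] by (simp add: fa_mult_sumR)
  finally show ?thesis .
qed

lemma ore_ext_mult: "mult (ore_ext R d) f g n = (\<Oplus>\<^bsub>R\<^esub> i\<in>{i. f i \<noteq> \<zero>\<^bsub>R\<^esub>}. \<Oplus>\<^bsub>R\<^esub> j\<in>{j. g j \<noteq> \<zero>\<^bsub>R\<^esub>}. \<Oplus>\<^bsub>R\<^esub> l\<in>{..i}.
               (if l + j = n then f i \<otimes>\<^bsub>R\<^esub> add_pow R (i choose l) ((d ^^ (i - l)) (g j)) else \<zero>\<^bsub>R\<^esub>))"
  by (simp add: ore_ext_def)

lemma quot_support_subset: "vanishes_above M g \<Longrightarrow> {j. piB (g j) \<noteq> \<zero>\<^bsub>B_alg\<^esub>} \<subseteq> {..M :: nat}"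
  by (auto simp: zero_B_alg piB_zero not_le[symmetric])

lemma finsum_quot_support:
  assumes "vanishes_above M g" and "\<And>j. j \<le> M \<Longrightarrow> F j \<in> carrier (free_alg 6)"
    and "\<And>j. g j \<in> idealB \<Longrightarrow> F j \<in> idealB"
    and "\<And>j. g j \<in> carrier (free_alg 6)"
  shows "(\<Oplus>\<^bsub>B_alg\<^esub> j\<in>{j. piB (g j) \<noteq> \<zero>\<^bsub>B_alg\<^esub>}. piB (F j)) = piB (\<lambda>w. \<Sum>j\<le>M. F j w :: 'k::field)"
proof -
  interpret B: ring "B_alg :: ((nat list \<Rightarrow> 'k) set) ring" by (rule ring_B_alg)
  have "(\<Oplus>\<^bsub>B_alg\<^esub> j\<in>{j. piB (g j) \<noteq> \<zero>\<^bsub>B_alg\<^esub>}. piB (F j)) = (\<Oplus>\<^bsub>B_alg\<^esub> j\<in>{..M}. piB (F j))"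
  proof (rule B.add.finprod_mono_neutral_cong_left)
    show "{j. piB (g j) \<noteq> \<zero>\<^bsub>B_alg\<^esub>} \<subseteq> {..M}" by (rule quot_support_subset[OF assms(1)])
    show "piB (F j) = \<zero>\<^bsub>B_alg\<^esub>" if "j \<in> {..M} - {j. piB (g j) \<noteq> \<zero>\<^bsub>B_alg\<^esub>}" for j
      using that assms(2,3) piB_is_zero[OF assms(4)] piB_is_zero[of "F j"] by auto
  qed (use assms(2) piB_carrier in auto)
  also have "\<dots> = piB (\<lambda>w. \<Sum>j\<le>M. F j w)" by (rule finsum_piB) (use assms(2) in auto)
  finally show ?thesis .
qed

lemma quot_ore_mult_seq:
  assumes h: "ore_poly h" and bh: "vanishes_above N h" and g: "ore_poly (g :: 'k::field ore_seq)" and bg: "vanishes_above M g"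
  shows "piB (ore_mult_seq N h g n) = mult (ore_ext B_alg delta_B) (\<lambda>n. piB (h n)) (\<lambda>n. piB (g n)) n"
proof -
  note IB = idealB_ideal[where 'k='k]
  have hc: "h i \<in> carrier (free_alg 6)" for i by (rule ore_poly_carrier[OF h])
  have gc: "g j \<in> carrier (free_alg 6)" for j by (rule ore_poly_carrier[OF g])
  define T where "T = (\<lambda>i j l. if l + j = n then fa_mult (h i) (\<lambda>w. of_nat (i choose l) * (delta ^^ (i - l)) (g j) w) else (\<lambda>w. 0 :: 'k))"
  have Tc: "T i j l \<in> carrier (free_alg 6)" for i j l
    unfolding T_def by (auto intro!: fa_mult_closed hc carrier_scale delta_pow_carrier gc carrier_zero)
  have Tc': "(\<lambda>w. \<Sum>l\<le>i. T i j l w) \<in> carrier (free_alg 6)" for i j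
    by (rule carrier_sum') (auto simp: Tc)
  have Tc'': "(\<lambda>w. \<Sum>j\<le>M. \<Sum>l\<le>i. T i j l w) \<in> carrier (free_alg 6)" for i
    by (rule carrier_sum') (auto simp: Tc')
  have T_g: "T i j l \<in> idealB" if "g j \<in> idealB" for i j l
    unfolding T_def using fa_ideal_multL[OF IB fa_ideal_scale[OF IB delta_pow_idealB[OF that]] hc] fa_ideal_zero[OF IB] by auto
  have T_h: "T i j l \<in> idealB" if "h i \<in> idealB" for i j l
    unfolding T_def using fa_ideal_multR[OF IB that carrier_scale[OF delta_pow_carrier[OF gc]]] fa_ideal_zero[OF IB] by auto
  have term_eq: "(if l + j = n then piB (h i) \<otimes>\<^bsub>B_alg\<^esub> add_pow B_alg (i choose l) ((delta_B ^^ (i - l)) (piB (g j)))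
      else \<zero>\<^bsub>B_alg\<^esub>) = piB (T i j l)" for i j l
    unfolding T_def
    by (simp add: delta_B_pow_piB[OF gc] add_pow_piB[OF delta_pow_carrier[OF gc]] zero_B_alg piB_zero
        piB_mult[OF hc carrier_scale[OF delta_pow_carrier[OF gc]]])
  have "mult (ore_ext B_alg delta_B) (\<lambda>n. piB (h n)) (\<lambda>n. piB (g n)) n
      = (\<Oplus>\<^bsub>B_alg\<^esub> i\<in>{i. piB (h i) \<noteq> \<zero>\<^bsub>B_alg\<^esub>}. \<Oplus>\<^bsub>B_alg\<^esub> j\<in>{j. piB (g j) \<noteq> \<zero>\<^bsub>B_alg\<^esub>}. piB (\<lambda>w. \<Sum>l\<le>i. T i j l w))"
    unfolding ore_ext_mult term_eq by (simp add: finsum_piB Tc)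
  also have "\<dots> = (\<Oplus>\<^bsub>B_alg\<^esub> i\<in>{i. piB (h i) \<noteq> \<zero>\<^bsub>B_alg\<^esub>}. piB (\<lambda>w. \<Sum>j\<le>M. \<Sum>l\<le>i. T i j l w))"
    by (simp add: finsum_quot_support[OF bg Tc' _ gc] fa_ideal_sum[OF IB, of _ _ "\<lambda>_. 1", simplified] T_g)
  also have "\<dots> = piB (\<lambda>w. \<Sum>i\<le>N. \<Sum>j\<le>M. \<Sum>l\<le>i. T i j l w)"
    by (rule finsum_quot_support[OF bh Tc'' _ hc])
      (auto intro!: fa_ideal_sum[OF IB, of _ _ "\<lambda>_. 1", simplified] T_h)
  also have "(\<lambda>w. \<Sum>i\<le>N. \<Sum>j\<le>M. \<Sum>l\<le>i. T i j l w) = ore_mult_seq N h g n"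
    unfolding ore_mult_seq_def T_def
    by (intro ext sum.cong refl) (simp add: if_distrib[of "\<lambda>f. f _"] ore_mult_seq_coeff[OF h g bg, symmetric] cong: if_cong)
  finally show ?thesis by simp
qed

section \<open>Lifting coefficient sequences to the free algebra\<close>

definition x7_pow :: "nat \<Rightarrow> nat list \<Rightarrow> 'k::field" where
  "x7_pow i = mon (replicate i 7)"

definition ore_lift :: "nat \<Rightarrow> 'k::field ore_seq \<Rightarrow> nat list \<Rightarrow> 'k" where
  "ore_lift N h = (\<lambda>w. \<Sum>i\<le>N. fa_mult (h i) (x7_pow i) w)"

definition ore_X_pow :: "nat \<Rightarrow> 'k::field ore_seq" where
  "ore_X_pow i = (\<lambda>n. if n = i then mon [] else (\<lambda>w. 0))"

lemma x7_pow_carrier: "x7_pow i \<in> carrier (free_alg 7 :: (nat list \<Rightarrow> 'k::field) ring)"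
  unfolding x7_pow_def by (rule mon_carrier) auto

lemma x7_pow_Suc: "x7_pow (Suc i) = fa_mult (gen 7) (x7_pow i :: nat list \<Rightarrow> 'k::field)"
  unfolding x7_pow_def gen_mon by (simp add: mon_mult)

lemma act_x7_ore_X_pow: "act 7 (ore_X_pow i) = (ore_X_pow (Suc i) :: 'k::field ore_seq)"
  unfolding act_x7 ore_X_pow_def
  by (intro ext) (auto simp: delta_mon_Nil delta_zero)

lemma word_act_replicate_x7: "word_act (replicate i 7) ore_one = (ore_X_pow i :: 'k::field ore_seq)"
proof (induction i)
  case 0 then show ?case by (simp add: ore_one_def ore_X_pow_def)
next
  case (Suc i) then show ?case by (simp add: act_x7_ore_X_pow)
qed

lemma ore_lift_carrier: "ore_poly h \<Longrightarrow> ore_lift N h \<in> carrier (free_alg 7 :: (nat list \<Rightarrow> 'k::field) ring)"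
  unfolding ore_lift_def
  by (intro carrier_sum' ballI finite_atMost fa_mult_closed x7_pow_carrier carrier_free_alg_mono[of 6 7] ore_poly_carrier) auto

lemma ore_lift_mono: "vanishes_above N h \<Longrightarrow> N \<le> N' \<Longrightarrow> ore_lift N' h = ore_lift N h"
  unfolding ore_lift_def
  by (intro ext sum.mono_neutral_right) (auto simp: fa_mult_zeroL)

lemma ore_lift_indep: "vanishes_above N1 h \<Longrightarrow> vanishes_above N2 h \<Longrightarrow> ore_lift N1 h = ore_lift N2 h"
  using ore_lift_mono[of N1 h "max N1 N2"] ore_lift_mono[of N2 h "max N1 N2"] by simp

lemma ore_lift_linear: "finite A \<Longrightarrow> ore_lift N (\<lambda>n w. \<Sum>j\<in>A. c j * h j n w) = (\<lambda>w. \<Sum>j\<in>A. c j * ore_lift N (h j) w)"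
  unfolding ore_lift_def
  by (intro ext) (simp add: fa_mult_sumL sum_distrib_left, rule sum.swap)

lemma ore_lift_ore_one: "ore_lift N ore_one = (mon [] :: nat list \<Rightarrow> 'k::field)"
proof (rule ext)
  fix w
  have "ore_lift N (ore_one :: 'k ore_seq) w = (\<Sum>i\<le>N. if i = 0 then fa_mult (mon []) (x7_pow i) w else (0::'k))"
    unfolding ore_lift_def ore_one_def by (rule sum.cong) (auto simp: fa_mult_zeroL)
  also have "\<dots> = mon [] w" by (simp add: x7_pow_def mon_Nil fa_mult_oneL)
  finally show "ore_lift N (ore_one :: 'k ore_seq) w = mon [] w" .
qed

lemma ore_lift_idealA:
  assumes "\<And>i. h i \<in> idealB"
  shows "ore_lift N h \<in> (idealA :: (nat list \<Rightarrow> 'k::field) set)"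
proof -
  have "(\<lambda>w. \<Sum>i\<le>N. 1 * fa_mult (h i) (x7_pow i) w) \<in> (idealA :: (nat list \<Rightarrow> 'k) set)"
    using assms idealB_idealA by (intro fa_ideal_sum[OF idealA_ideal] ballI fa_ideal_multR[OF idealA_ideal _ x7_pow_carrier]) auto
  then show ?thesis unfolding ore_lift_def by simp
qed

lemma action_ore_lift:
  assumes h: "ore_poly (h :: 'k::field ore_seq)" and b: "vanishes_above N h"
  shows "action (ore_lift N h) ore_one = h"
proof -
  have hc: "h i \<in> carrier (free_alg 6)" for i by (rule ore_poly_carrier[OF h])
  have r: "action (fa_mult (h i) (x7_pow i)) ore_one = (\<lambda>n. fa_mult (h i) (ore_X_pow i n))" for i
  proof -
    have "action (fa_mult (h i) (x7_pow i)) ore_one = action (h i) (action (x7_pow i) ore_one)"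
      by (rule action_mult[OF carrier_free_alg_mono[of 6 7, OF _ hc] x7_pow_carrier ore_poly_ore_one]) simp
    also have "action (x7_pow i) ore_one = ore_X_pow i" unfolding x7_pow_def action_mon word_act_replicate_x7 ..
    finally show ?thesis by (simp add: action_left_mult[OF hc])
  qed
  have "action (ore_lift N h) ore_one = (\<lambda>n w. \<Sum>i\<le>N. action (fa_mult (h i) (x7_pow i)) ore_one n w)"
    unfolding ore_lift_def
    by (rule action_sum) (auto intro: fsupp_mult ore_poly_fsupp[OF h] carrier_fsupp[OF x7_pow_carrier])
  also have "\<dots> = (\<lambda>n w. \<Sum>i\<le>N. if i = n then h n w else 0)"
    unfolding r ore_X_pow_def
    by (intro ext sum.cong refl) (auto simp: fa_mult_zeroR mon_Nil fa_mult_oneR)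
  also have "\<dots> = h"
    using b by (auto simp: fun_eq_iff not_le)
  finally show ?thesis .
qed

definition x7_defect :: "(nat list \<Rightarrow> 'k::field) \<Rightarrow> nat list \<Rightarrow> 'k" where
  "x7_defect q = (\<lambda>w. fa_mult (gen 7) q w - fa_mult q (gen 7) w - delta q w)"

lemma ore_rel_idealA:
  assumes a: "a \<in> {1..6}"
  shows "ore_rel a \<in> (idealA :: (nat list \<Rightarrow> 'k::field) set)"
proof -
  have "relA (7 - a) \<in> (idealA :: (nat list \<Rightarrow> 'k) set)" using a by (intro relA_idealA) auto
  then have "relA (7 - a) \<in> (idealA :: (nat list \<Rightarrow> 'k) set)"
    and "(\<lambda>w. - relA (7 - a) w) \<in> (idealA :: (nat list \<Rightarrow> 'k) set)"
    using fa_ideal_neg[OF idealA_ideal] by auto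
  moreover have "a = 1 \<or> a = 2 \<or> a = 3 \<or> a = 4 \<or> a = 5 \<or> a = 6" using a by auto
  ultimately show ?thesis by (elim disjE) (simp_all add: relA_ore_rel relA_ore_rel(6)[unfolded One_nat_def])
qed

lemma x7_defect_mon: "set u \<subseteq> {1..6} \<Longrightarrow> x7_defect (mon u) \<in> (idealA :: (nat list \<Rightarrow> 'k::field) set)"
proof (induction u)
  note IA = idealA_ideal[where 'k='k]
  case Nil
  have "x7_defect (mon [] :: nat list \<Rightarrow> 'k) = (\<lambda>w. 0)"
    unfolding x7_defect_def delta_mon_Nil by (simp add: mon_Nil fa_mult_oneL fa_mult_oneR)
  then show ?case using fa_ideal_zero[OF IA] by simp
next
  note IA = idealA_ideal[where 'k='k]
  case (Cons a u)
  have a: "a \<in> {1..6}" and su: "set u \<subseteq> {1..6}" using Cons.prems by auto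
  have mC: "mon (a # u) = fa_mult (gen a) (mon u :: nat list \<Rightarrow> 'k)"
    by (simp add: gen_mon mon_mult)
  have dC: "delta (mon (a # u) :: nat list \<Rightarrow> 'k) = (\<lambda>w. fa_mult (delta_gen a) (mon u) w + fa_mult (gen a) (delta (mon u)) w)"
    unfolding delta_def der_ext_mon der_word_Cons ..
  have eq: "x7_defect (mon (a # u) :: nat list \<Rightarrow> 'k) = (\<lambda>w. fa_mult (ore_rel a) (mon u) w + fa_mult (gen a) (x7_defect (mon u)) w)"
    unfolding x7_defect_def ore_rel_def comm_def dC
    by (simp add: mC fa_mult_diffL fa_mult_diffR fa_mult_addL fa_mult_addR fa_mult_assoc algebra_simps)
  have "fa_mult (ore_rel a) (mon u) \<in> (idealA :: (nat list \<Rightarrow> 'k) set)"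
    by (rule fa_ideal_multR[OF IA ore_rel_idealA[OF a]]) (rule mon_carrier, use su in auto)
  moreover have "fa_mult (gen a) (x7_defect (mon u)) \<in> (idealA :: (nat list \<Rightarrow> 'k) set)"
    by (rule fa_ideal_multL[OF IA Cons.IH[OF su]]) (rule gen_carrier, use a in auto)
  ultimately show ?case unfolding eq by (rule fa_ideal_add[OF IA])
qed

lemma x7_defect_linear: "finite A \<Longrightarrow> (\<forall>i\<in>A. fsupp (f i)) \<Longrightarrow>
  x7_defect (\<lambda>w. \<Sum>i\<in>A. c i * f i w) = (\<lambda>w. \<Sum>i\<in>A. c i * x7_defect (f i) w :: 'k::field)"
  unfolding x7_defect_def delta_def
  by (simp add: der_ext_sum fa_mult_sumL fa_mult_sumR sum_subtractf right_diff_distrib)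

lemma x7_defect_idealA: "q \<in> carrier (free_alg 6) \<Longrightarrow> x7_defect q \<in> (idealA :: (nat list \<Rightarrow> 'k::field) set)"
proof -
  assume q: "q \<in> carrier (free_alg 6)"
  have fq: "fsupp q" using q by (rule carrier_fsupp)
  have "x7_defect q = x7_defect (\<lambda>x. \<Sum>v\<in>{v. q v \<noteq> 0}. q v * mon v x)"
    by (subst fsupp_eq_sum_mon[OF fq]) (rule refl)
  also have "\<dots> = (\<lambda>w. \<Sum>v\<in>{v. q v \<noteq> 0}. q v * x7_defect (mon v) w)"
    by (rule x7_defect_linear) (auto simp: fq fsupp_mon)
  also have "\<dots> \<in> idealA"
    by (rule fa_ideal_sum[OF idealA_ideal]) (use fq x7_defect_mon carrier_words[OF q] in auto)
  finally show ?thesis .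
qed

lemma ore_lift_act_x7:
  assumes b: "vanishes_above N h"
  shows "ore_lift (Suc N) (act 7 h) w
    = (\<Sum>i\<le>N. fa_mult (h i) (x7_pow (Suc i)) w) + (\<Sum>i\<le>N. fa_mult (delta (h i)) (x7_pow i) w :: 'k::field)"
proof -
  have "ore_lift (Suc N) (act 7 h) w
      = fa_mult (delta (h 0)) (x7_pow 0) w
        + (\<Sum>i\<le>N. fa_mult (h i) (x7_pow (Suc i)) w + fa_mult (delta (h (Suc i))) (x7_pow (Suc i)) w)"
    unfolding ore_lift_def sum.atMost_Suc_shift by (simp add: act_x7 fa_mult_addL)
  also have "\<dots> = (\<Sum>i\<le>N. fa_mult (h i) (x7_pow (Suc i)) w) + (\<Sum>i\<le>Suc N. fa_mult (delta (h i)) (x7_pow i) w)"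
    by (simp only: sum.atMost_Suc_shift sum.distrib) (simp add: algebra_simps)
  also have "(\<Sum>i\<le>Suc N. fa_mult (delta (h i)) (x7_pow i) w) = (\<Sum>i\<le>N. fa_mult (delta (h i)) (x7_pow i) w)"
    using b by (simp add: delta_zero fa_mult_zeroL)
  finally show ?thesis .
qed

lemma x7_mult_ore_lift:
  assumes h: "ore_poly (h :: 'k::field ore_seq)" and b: "vanishes_above N h"
  shows "(\<lambda>w. fa_mult (gen 7) (ore_lift N h) w - ore_lift (Suc N) (act 7 h) w) \<in> (idealA :: (nat list \<Rightarrow> 'k) set)"
proof -
  note IA = idealA_ideal[where 'k='k]
  have "fa_mult (x7_defect (h i)) (x7_pow i) w
      = fa_mult (gen 7) (fa_mult (h i) (x7_pow i)) w - fa_mult (h i) (x7_pow (Suc i)) w - fa_mult (delta (h i)) (x7_pow i) w"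
    for i w
    unfolding x7_defect_def x7_pow_Suc by (simp add: fa_mult_diffL fa_mult_assoc)
  then have eq: "(\<lambda>w. fa_mult (gen 7) (ore_lift N h) w - ore_lift (Suc N) (act 7 h) w)
      = (\<lambda>w. \<Sum>i\<le>N. 1 * fa_mult (x7_defect (h i)) (x7_pow i) w)"
    unfolding ore_lift_act_x7[OF b] by (simp add: ore_lift_def fa_mult_sumR' sum_subtractf diff_diff_eq sum.distrib)
  show ?thesis unfolding eq
    by (rule fa_ideal_sum[OF IA]) (auto intro: fa_ideal_multR[OF IA] x7_defect_idealA ore_poly_carrier[OF h] x7_pow_carrier)
qed

lemma gen_mult_ore_lift:
  assumes h: "ore_poly (h :: 'k::field ore_seq)" and b: "vanishes_above N h" and a: "a \<in> {1..7}"
  shows "(\<lambda>w. fa_mult (gen a) (ore_lift N h) w - ore_lift (Suc N) (act a h) w) \<in> (idealA :: (nat list \<Rightarrow> 'k) set)"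
proof (cases "a = 7")
  case True then show ?thesis using x7_mult_ore_lift[OF h b] by simp
next
  case False
  have "fa_mult (gen a) (ore_lift N h) = ore_lift N (act a h)"
    unfolding ore_lift_def act_left_mult[OF False] by (simp add: fa_mult_sumR' fa_mult_assoc)
  also have "\<dots> = ore_lift (Suc N) (act a h)"
    using ore_lift_mono[of N "act a h" "Suc N"] b by (simp add: act_left_mult[OF False] fa_mult_zeroR)
  finally show ?thesis using fa_ideal_zero[OF idealA_ideal] by simp
qed

lemma mon_minus_ore_lift_idealA:
  assumes u: "set u \<subseteq> {1..7}"
  shows "vanishes_above N (word_act u (ore_one::'k::field ore_seq)) \<Longrightarrow> (\<lambda>w. mon u w - ore_lift N (word_act u ore_one) w) \<in> (idealA :: (nat list \<Rightarrow> 'k) set)"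
  using u
proof (induction u arbitrary: N)
  note IA = idealA_ideal[where 'k='k]
  case Nil
  then show ?case using fa_ideal_zero[OF IA] by (simp add: ore_lift_ore_one)
next
  note IA = idealA_ideal[where 'k='k]
  case (Cons a u)
  have su: "set u \<subseteq> {1..7}" and a: "a \<in> {1..7}" using Cons.prems(2) by auto
  have gh: "ore_poly (word_act u (ore_one::'k ore_seq))" by (rule ore_poly_word_act[OF su ore_poly_ore_one])
  from ore_poly_vanishes_above[OF gh] obtain N0 where N0: "vanishes_above N0 (word_act u (ore_one::'k ore_seq))" by blast
  let ?h = "word_act u (ore_one::'k ore_seq)"
  have IH: "(\<lambda>w. mon u w - ore_lift N0 ?h w) \<in> idealA" by (rule Cons.IH[OF N0 su])
  have NN: "ore_lift N (word_act (a # u) ore_one) = ore_lift (Suc N0) (act a ?h)"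
    using ore_lift_indep[OF Cons.prems(1)[unfolded word_act_Cons] vanishes_above_act[OF N0]] by simp
  have ga: "gen a \<in> carrier (free_alg 7 :: (nat list \<Rightarrow> 'k) ring)" using a by (rule gen_carrier)
  have IH': "fa_mult (gen a) (\<lambda>w. mon u w - ore_lift N0 ?h w) \<in> idealA" by (rule fa_ideal_multL[OF IA IH ga])
  have step: "(\<lambda>w. fa_mult (gen a) (ore_lift N0 ?h) w - ore_lift (Suc N0) (act a ?h) w) \<in> idealA"
    by (rule gen_mult_ore_lift[OF gh N0 a])
  have "(\<lambda>w. mon (a # u) w - ore_lift N (word_act (a # u) ore_one) w)
      = (\<lambda>w. fa_mult (gen a) (\<lambda>w. mon u w - ore_lift N0 ?h w) w + (fa_mult (gen a) (ore_lift N0 ?h) w - ore_lift (Suc N0) (act a ?h) w))"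
    unfolding NN by (simp add: fa_mult_diffR gen_mon mon_mult)
  then show ?case using fa_ideal_add[OF IA IH' step] by simp
qed

lemma minus_ore_lift_action_idealA:
  assumes p: "p \<in> carrier (free_alg 7)" and b: "vanishes_above N (action p (ore_one::'k::field ore_seq))"
  shows "(\<lambda>w. p w - ore_lift N (action p ore_one) w) \<in> (idealA :: (nat list \<Rightarrow> 'k) set)"
proof -
  let ?S = "{u. p u \<noteq> 0}"
  have fS: "finite ?S" using p carrier_fsupp by blast
  obtain M where bw: "\<And>u. p u \<noteq> 0 \<Longrightarrow> vanishes_above M (word_act u (ore_one :: 'k ore_seq))"
    and bM: "vanishes_above M (action p (ore_one :: 'k ore_seq))"
    using action_ore_one_bound[OF p] by blast
  have "(\<lambda>w. p w - ore_lift M (action p ore_one) w)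
      = (\<lambda>w. \<Sum>u\<in>?S. p u * (mon u w - ore_lift M (word_act u ore_one) w))"
  proof (rule ext)
    fix w
    have "p w = (\<Sum>u\<in>?S. p u * mon u w)"
      by (subst fsupp_eq_sum_mon[OF fS]) (rule refl)
    then show "p w - ore_lift M (action p ore_one) w = (\<Sum>u\<in>?S. p u * (mon u w - ore_lift M (word_act u ore_one) w))"
      by (simp only: action_eq_sum ore_lift_linear[OF fS] sum_subtractf right_diff_distrib)
  qed
  also have "\<dots> \<in> idealA"
    by (rule fa_ideal_sum[OF idealA_ideal fS]) (use mon_minus_ore_lift_idealA carrier_words[OF p] bw in blast)
  finally show ?thesis using ore_lift_indep[OF b bM] by simp
qed

lemma quot_ore_poly_carrier:
  assumes h: "ore_poly h"
  shows "(\<lambda>n. piB (h n)) \<in> carrier (ore_ext B_alg delta_B :: (nat \<Rightarrow> (nat list \<Rightarrow> 'k::field) set) ring)"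
proof -
  obtain N where N: "vanishes_above N (h :: 'k ore_seq)" using ore_poly_vanishes_above[OF h] by blast
  have "finite {i. piB (h i) \<noteq> \<zero>\<^bsub>B_alg\<^esub>}"
    using quot_support_subset[OF N] by (rule finite_subset) simp
  then show ?thesis by (simp add: ore_ext_def piB_carrier ore_poly_carrier[OF h])
qed

lemma quot_ore_poly_surj:
  assumes f: "f \<in> carrier (ore_ext B_alg delta_B :: (nat \<Rightarrow> (nat list \<Rightarrow> 'k::field) set) ring)"
  obtains h N where "ore_poly h" "vanishes_above N h" "(\<lambda>n. piB (h n)) = f"
proof -
  have fc: "\<And>i. f i \<in> carrier B_alg" and ff: "finite {i. f i \<noteq> \<zero>\<^bsub>B_alg\<^esub>}"
    using f by (auto simp: ore_ext_def)
  define h where "h = (\<lambda>i. if f i = \<zero>\<^bsub>B_alg\<^esub> then (\<lambda>w. 0) else (SOME p. p \<in> f i))"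
  have hc: "h i \<in> carrier (free_alg 6 :: (nat list \<Rightarrow> 'k) ring)" for i
    unfolding h_def using piB_some[OF fc[of i]] carrier_zero by auto
  have hf: "piB (h i) = f i" for i
    unfolding h_def using piB_some[OF fc[of i]] by (auto simp: piB_zero zero_B_alg)
  define N where "N = Max (insert 0 {i. f i \<noteq> \<zero>\<^bsub>B_alg\<^esub>})"
  have N: "vanishes_above N h"
  proof (intro allI impI)
    fix i assume "i > N"
    then have "f i = \<zero>\<^bsub>B_alg\<^esub>" unfolding N_def using ff
      by (metis (mono_tags, lifting) Max_ge finite_insert insertCI mem_Collect_eq not_le)
    then show "h i = (\<lambda>w. 0)" unfolding h_def by simp
  qed
  then have "ore_poly h" unfolding ore_poly_def using hc by blast
  with N hf that show ?thesis by blast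
qed

definition ore_iso :: "(nat list \<Rightarrow> 'k::field) set \<Rightarrow> nat \<Rightarrow> (nat list \<Rightarrow> 'k) set" where
  "ore_iso C = (\<lambda>n. piB (action (SOME p. p \<in> C) ore_one n))"

lemma ore_iso_piA:
  assumes p: "p \<in> carrier (free_alg 7)"
  shows "ore_iso (piA p) = (\<lambda>n. piB (action p ore_one n :: nat list \<Rightarrow> 'k::field))"
proof -
  define p' where "p' = (SOME x. x \<in> piA p)"
  have pc: "p' \<in> carrier (free_alg 7)" and pe: "piA p' = piA p"
    using coset_some[OF idealA_ideal pi_carrier[OF idealA_ideal p]] unfolding p'_def by auto
  have "(\<lambda>w. p' w - p w) \<in> idealA" using pe piA_eq[OF pc p] by simp
  then have kernel: "action (\<lambda>w. p' w - p w) ore_one n \<in> idealB" for n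
    using idealA_action_kernel ore_poly_ore_one unfolding action_kernel_def by auto
  have r: "action (\<lambda>w. p' w - p w) ore_one = (\<lambda>n w. action p' ore_one n w - action p ore_one n w)"
    by (rule action_diff) (use pc p carrier_fsupp in auto)
  have "piB (action p' ore_one n) = piB (action p ore_one n)" for n
    using kernel[of n] piB_eq[OF action_ore_one_carrier[OF pc] action_ore_one_carrier[OF p]] unfolding r by simp
  then show ?thesis unfolding ore_iso_def p'_def[symmetric] by simp
qed

lemma ore_iso_piA_carrier:
  "p \<in> carrier (free_alg 7) \<Longrightarrow> ore_iso (piA p) \<in> carrier (ore_ext B_alg delta_B :: (nat \<Rightarrow> (nat list \<Rightarrow> 'k::field) set) ring)"
  unfolding ore_iso_piA by (rule quot_ore_poly_carrier[OF ore_poly_action[OF _ ore_poly_ore_one]])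

lemma ore_iso_piA_mult:
  assumes p: "p \<in> carrier (free_alg 7)" and q: "q \<in> carrier (free_alg 7)"
  shows "ore_iso (piA (fa_mult p q)) = ore_iso (piA p) \<otimes>\<^bsub>ore_ext B_alg delta_B\<^esub> ore_iso (piA (q :: nat list \<Rightarrow> 'k::field))"
proof -
  have gp: "ore_poly (action p (ore_one :: 'k ore_seq))" and gq: "ore_poly (action q (ore_one :: 'k ore_seq))"
    using p q by (simp_all add: ore_poly_action ore_poly_ore_one)
  obtain M where M: "vanishes_above M (action q (ore_one :: 'k ore_seq))"
    using ore_poly_vanishes_above[OF gq] by blast
  obtain N where N: "vanishes_above N (action p (ore_one :: 'k ore_seq))"
    and NM: "action p (action q ore_one) = ore_mult_seq N (action p ore_one) (action q ore_one)"
    using action_eq_ore_mult_seq[OF p gq] by blast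
  have "ore_iso (piA (fa_mult p q)) = (\<lambda>n. piB (action p (action q ore_one) n))"
    by (simp add: ore_iso_piA fa_mult_closed[OF p q] action_mult[OF p q ore_poly_ore_one])
  also have "\<dots> = mult (ore_ext B_alg delta_B) (\<lambda>n. piB (action p ore_one n)) (\<lambda>n. piB (action q ore_one n))"
    unfolding NM by (rule ext, rule quot_ore_mult_seq[OF gp N gq M])
  finally show ?thesis by (simp add: ore_iso_piA[OF p] ore_iso_piA[OF q])
qed

lemma ore_iso_piA_add:
  assumes p: "p \<in> carrier (free_alg 7)" and q: "q \<in> carrier (free_alg 7)"
  shows "ore_iso (piA (\<lambda>w. p w + q w)) = ore_iso (piA p) \<oplus>\<^bsub>ore_ext B_alg delta_B\<^esub> ore_iso (piA (q :: nat list \<Rightarrow> 'k::field))"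
proof -
  have "ore_iso (piA (\<lambda>w. p w + q w)) = (\<lambda>n. piB (\<lambda>w. action p ore_one n w + action q ore_one n w))"
    by (simp add: ore_iso_piA fa_add_closed[OF p q] action_add carrier_fsupp[OF p] carrier_fsupp[OF q])
  also have "\<dots> = (\<lambda>n. piB (action p ore_one n) \<oplus>\<^bsub>B_alg\<^esub> piB (action q ore_one n))"
    by (rule ext, rule piB_add[OF action_ore_one_carrier[OF p] action_ore_one_carrier[OF q]])
  finally show ?thesis by (simp add: ore_iso_piA[OF p] ore_iso_piA[OF q] ore_ext_def)
qed

lemma ore_iso_piA_one: "ore_iso (piA (mon [])) = \<one>\<^bsub>ore_ext B_alg delta_B :: (nat \<Rightarrow> (nat list \<Rightarrow> 'k::field) set) ring\<^esub>"
  by (rule ext) (simp add: ore_iso_piA mon_carrier action_mon ore_ext_def ore_one_def piB_one piB_zero zero_B_alg)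

lemma ore_iso_ring_hom:
  "ore_iso \<in> ring_hom (A_alg :: ((nat list \<Rightarrow> 'k::field) set) ring) (ore_ext B_alg delta_B)"
proof (rule ring_hom_memI)
  show "ore_iso (\<one>\<^bsub>A_alg\<^esub> :: (nat list \<Rightarrow> 'k) set) = \<one>\<^bsub>ore_ext B_alg delta_B\<^esub>"
    using ore_iso_piA_one by (simp add: piA_one)
qed (auto dest!: carrier_A_alg simp: ore_iso_piA_carrier piA_mult[symmetric] piA_add[symmetric]
    ore_iso_piA_mult ore_iso_piA_add)

lemma ore_iso_piA_inj:
  assumes p: "p \<in> carrier (free_alg 7)" and q: "q \<in> carrier (free_alg 7)"
    and eq: "ore_iso (piA p) = ore_iso (piA (q :: nat list \<Rightarrow> 'k::field))"
  shows "piA p = piA q"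
proof -
  define r where "r = (\<lambda>w. p w - q w)"
  have r: "r \<in> carrier (free_alg 7)" unfolding r_def by (rule carrier_diff[OF p q])
  have "action r (ore_one :: 'k ore_seq) n \<in> idealB" for n
  proof -
    have "piB (action p (ore_one :: 'k ore_seq) n) = piB (action q ore_one n)"
      using eq by (simp add: ore_iso_piA[OF p] ore_iso_piA[OF q] fun_eq_iff)
    then show ?thesis
      using piB_eq[OF action_ore_one_carrier[OF p] action_ore_one_carrier[OF q]]
      by (simp add: r_def action_diff carrier_fsupp[OF p] carrier_fsupp[OF q])
  qed
  moreover obtain N where N: "vanishes_above N (action r (ore_one :: 'k ore_seq))"
    using ore_poly_vanishes_above[OF ore_poly_action[OF r ore_poly_ore_one]] by blast
  ultimately have "(\<lambda>w. (r w - ore_lift N (action r ore_one) w) + ore_lift N (action r ore_one) w) \<in> idealA"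
    by (intro fa_ideal_add[OF idealA_ideal] minus_ore_lift_action_idealA[OF r N] ore_lift_idealA)
  then show ?thesis using piA_eq[OF p q] by (simp add: r_def)
qed

lemma ore_iso_piA_surj:
  assumes "f \<in> carrier (ore_ext B_alg delta_B :: (nat \<Rightarrow> (nat list \<Rightarrow> 'k::field) set) ring)"
  shows "\<exists>p\<in>carrier (free_alg 7). ore_iso (piA p) = f"
proof -
  obtain h N where h: "ore_poly h" and N: "vanishes_above N h" and hf: "(\<lambda>n. piB (h n)) = f"
    using quot_ore_poly_surj[OF assms] by blast
  have "ore_iso (piA (ore_lift N h)) = f"
    by (simp add: ore_iso_piA ore_lift_carrier[OF h] action_ore_lift[OF h N] hf)
  then show ?thesis using ore_lift_carrier[OF h] by blast
qed

lemma ore_iso_ring_iso: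
  "ore_iso \<in> ring_iso (A_alg :: ((nat list \<Rightarrow> 'k::field) set) ring) (ore_ext B_alg delta_B)"
proof -
  have "inj_on ore_iso (carrier (A_alg :: ((nat list \<Rightarrow> 'k) set) ring))"
  proof (rule inj_onI)
    fix C D assume C: "C \<in> carrier A_alg" and D: "D \<in> carrier A_alg" and eq: "ore_iso C = ore_iso D"
    obtain p q where "p \<in> carrier (free_alg 7)" "C = piA p" "q \<in> carrier (free_alg 7)" "D = piA q"
      using carrier_A_alg[OF C] carrier_A_alg[OF D] by blast
    then show "C = D" using ore_iso_piA_inj eq by blast
  qed
  moreover have "ore_iso ` carrier (A_alg :: ((nat list \<Rightarrow> 'k) set) ring) = carrier (ore_ext B_alg delta_B)"
    using ring_hom_closed[OF ore_iso_ring_hom] ore_iso_piA_surj piA_carrier by blast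
  ultimately show ?thesis using ore_iso_ring_hom unfolding ring_iso_def bij_betw_def by blast
qed

lemma ore_iso_A_emb: "ore_iso (A_emb c) = ore_emb B_alg B_emb (c::'k::field)"
proof -
  have sc: "fa_scalar c \<in> carrier (free_alg 7 :: (nat list \<Rightarrow> 'k) ring)" by (rule fa_scalar_carrier)
  have sc6: "fa_scalar c \<in> carrier (free_alg 6 :: (nat list \<Rightarrow> 'k) ring)" by (rule fa_scalar_carrier)
  have "action (fa_scalar c) (ore_one::'k ore_seq) = (\<lambda>n. fa_mult (fa_scalar c) (ore_one n))" by (rule action_left_mult[OF sc6])
  then show ?thesis
    unfolding A_emb_def ore_iso_piA[OF sc]
    by (intro ext) (auto simp: ore_emb_def B_emb_def ore_one_def fa_scalar_mult fa_mult_zeroR piB_zero zero_B_alg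
        fa_scalar_mon[symmetric])
qed

theorem proposition4p8:
  shows "(\<forall>p\<in>(idealB :: (nat list \<Rightarrow> 'k::field) set). delta p \<in> idealB)
    \<and> is_k_derivation (B_alg :: ((nat list \<Rightarrow> 'k::field) set) ring) B_emb delta_B
    \<and> (\<exists>\<phi>. \<phi> \<in> ring_iso (A_alg :: ((nat list \<Rightarrow> 'k::field) set) ring) (ore_ext B_alg delta_B)
          \<and> (\<forall>c::'k. \<phi> (A_emb c) = ore_emb B_alg B_emb c))"
  using delta_idealB delta_B_is_k_derivation ore_iso_ring_iso ore_iso_A_emb by blast

end
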